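(* Let $H\in\mathbb{R}\setminus\{0\}$, $b>0$, $\lambda\ge0$, $\mu\in\mathbb{R}$, and let $u\in X_A$ be a real-valued solution of $$u_{xx}-H^2x^2u+|u|^2u+\rho(|u|^2)u=\mu u\quad\text{on }\mathbb{R}.$$ Then $$2\|u_x\|_2^2-2H^2\|xu\|_2^2-\frac12\|u\|_4^4+\int_{\mathbb{R}}u^2\,x\,\rho_x(|u|^2)\,dx=0,$$ where $\rho_x(|u|^2)$ denotes the $x$-derivative of $\rho(|u|^2)$.
   Context: $X_A=\{u\in H^1(\mathbb{R}) : xu\in L^2(\mathbb{R})\}$. For $f\in L^2(\mathbb{R})$, $\rho(f)\in H^2(\mathbb{R})$ denotes the unique solution of $-\rho_{xx}-\lambda(\rho_x^3)_x+b\rho=f$ on $\mathbb{R}$. $\|\cdot\|_p$ is the $L^p(\mathbb{R})$ norm. *)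

theory Defs
  imports "HOL-Analysis.Analysis"
begin

definition test_fun :: "(real \<Rightarrow> real) \<Rightarrow> bool" where
  "test_fun \<phi> \<longleftrightarrow> (\<forall>k x. (deriv ^^ k) \<phi> differentiable (at x))
                    \<and> (\<exists>R. \<forall>x. R < \<bar>x\<bar> \<longrightarrow> \<phi> x = 0)"

definition loc_int :: "(real \<Rightarrow> real) \<Rightarrow> bool" where
  "loc_int f \<longleftrightarrow> (\<forall>a b. set_integrable lborel {a..b} f)"

definition L2 :: "(real \<Rightarrow> real) \<Rightarrow> bool" where
  "L2 f \<longleftrightarrow> f \<in> borel_measurable lborel \<and> integrable lborel (\<lambda>x. (f x)\<^sup>2)"

definition weak_deriv :: "(real \<Rightarrow> real) \<Rightarrow> (real \<Rightarrow> real) \<Rightarrow> bool" where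
  "weak_deriv f g \<longleftrightarrow> loc_int f \<and> loc_int g \<and>
     (\<forall>\<phi>. test_fun \<phi> \<longrightarrow>
        (LINT x|lborel. f x * deriv \<phi> x) = - (LINT x|lborel. g x * \<phi> x))"

definition in_H1 :: "(real \<Rightarrow> real) \<Rightarrow> bool" where
  "in_H1 f \<longleftrightarrow> L2 f \<and> (\<exists>g. weak_deriv f g \<and> L2 g)"

definition in_H2 :: "(real \<Rightarrow> real) \<Rightarrow> bool" where
  "in_H2 f \<longleftrightarrow> L2 f \<and> (\<exists>g. weak_deriv f g \<and> in_H1 g)"

definition in_XA :: "(real \<Rightarrow> real) \<Rightarrow> bool" where
  "in_XA u \<longleftrightarrow> in_H1 u \<and> L2 (\<lambda>x. x * u x)"

text \<open>r in H^2 solves -r'' - lam (r'^3)' + b r = f on R (weak form).\<close>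
definition is_rho :: "real \<Rightarrow> real \<Rightarrow> (real \<Rightarrow> real) \<Rightarrow> (real \<Rightarrow> real) \<Rightarrow> bool" where
  "is_rho lam b f r \<longleftrightarrow> in_H2 r \<and>
     (\<exists>r1. weak_deriv r r1 \<and>
        (\<forall>\<phi>. test_fun \<phi> \<longrightarrow>
           (LINT x|lborel. (r1 x + lam * (r1 x) ^ 3) * deriv \<phi> x + b * r x * \<phi> x)
             = (LINT x|lborel. f x * \<phi> x)))"

text \<open>u solves u'' - H^2 x^2 u + u^3 + r u = mu u on R in the distributional sense
  (u real-valued, so |u|^2 u = u^3).\<close>
definition solves_eq :: "real \<Rightarrow> real \<Rightarrow> (real \<Rightarrow> real) \<Rightarrow> (real \<Rightarrow> real) \<Rightarrow> bool" where
  "solves_eq H mu r u \<longleftrightarrow>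
     (\<forall>\<phi>. test_fun \<phi> \<longrightarrow>
        (LINT x|lborel. u x * deriv (deriv \<phi>) x)
          = (LINT x|lborel. (H\<^sup>2 * x\<^sup>2 * u x - (u x) ^ 3 - r x * u x + mu * u x) * \<phi> x))"

end

(*
  A function on the line whose weak derivative is locally integrable coincides almost everywhere
  with a primitive of that derivative (a consequence of the du Bois-Reymond lemma), and such a
  function with square integrable derivative is bounded when it is itself square integrable.
  Hence u and r = rho(u^2) have C^1 representatives U and R, and the equation for u holds
  classically: U'' = H^2 x^2 U - U^3 - R U + mu U.  For these, the integrand of the identity is
  the derivative of the flux  x U'^2 - H^2 x^3 U^2 + x U^4/2 + x R U^2 - mu x U^2 + U U',
  which combines the Pohozaev multiplier x U' with the multiplier U.  The flux is bounded by |x|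
  times an integrable function, so it is small at some +-R_n with R_n -> oo, and the integral of
  its derivative over [-R_n, R_n] tends to 0.
*)
theory Submission
  imports Defs "HOL-Computational_Algebra.Polynomial"
begin

section \<open>Smooth functions\<close>

definition smooth :: "(real \<Rightarrow> real) \<Rightarrow> bool" where
  "smooth f \<longleftrightarrow> (\<forall>k x. (deriv ^^ k) f differentiable (at x))"

lemma smooth_derivative_sequence:
  assumes "D 0 = f" "\<And>k x. (D k has_real_derivative D (Suc k) x) (at x)"
  shows "smooth f" "(deriv ^^ k) f = D k"
proof -
  have iterated: "(deriv ^^ k) f = D k" for k
    by (induction k) (use assms in \<open>auto simp: DERIV_imp_deriv\<close>)
  then show "(deriv ^^ k) f = D k" .
  show "smooth f"
    unfolding smooth_def iterated using assms(2) real_differentiable_def by blast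
qed

lemma smooth_has_iterated_derivative:
  assumes "smooth f"
  shows "((deriv ^^ k) f has_real_derivative (deriv ^^ Suc k) f x) (at x)"
  using assms unfolding smooth_def by (simp add: DERIV_deriv_iff_real_differentiable)

lemma smooth_has_derivative: "smooth f \<Longrightarrow> (f has_real_derivative deriv f x) (at x)"
  using smooth_has_iterated_derivative[of f 0] by simp

lemma smooth_imp_isCont: "smooth f \<Longrightarrow> isCont f x"
  using smooth_has_derivative DERIV_isCont by blast

lemma smooth_deriv: "smooth f \<Longrightarrow> smooth (deriv f)"
  unfolding smooth_def by (metis funpow_Suc_right o_apply)

lemma smooth_antiderivative:
  assumes "smooth g" "\<And>x. (F has_real_derivative g x) (at x)"
  shows "smooth F" "deriv F = g"
proof -
  show "smooth F"
    by (rule smooth_derivative_sequence(1)[where D="\<lambda>k. if k = 0 then F else (deriv ^^ (k - 1)) g"])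
       (use assms smooth_has_iterated_derivative[OF assms(1)] in \<open>auto simp: gr0_conv_Suc\<close>)
  show "deriv F = g" using assms(2) by (auto simp: DERIV_imp_deriv)
qed

lemma smooth_add: "smooth f \<Longrightarrow> smooth g \<Longrightarrow> smooth (\<lambda>x. f x + g x)"
  by (rule smooth_derivative_sequence(1)[where D="\<lambda>k x. (deriv ^^ k) f x + (deriv ^^ k) g x"])
     (auto intro!: derivative_eq_intros smooth_has_iterated_derivative)

lemma smooth_cmult: "smooth f \<Longrightarrow> smooth (\<lambda>x. c * f x)"
  by (rule smooth_derivative_sequence(1)[where D="\<lambda>k x. c * (deriv ^^ k) f x"])
     (auto intro!: derivative_eq_intros smooth_has_iterated_derivative)

lemma smooth_diff: "smooth f \<Longrightarrow> smooth g \<Longrightarrow> smooth (\<lambda>x. f x - g x)"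
  using smooth_add[OF _ smooth_cmult, of f g "-1"] by simp

lemma smooth_compose_affine: "smooth f \<Longrightarrow> smooth (\<lambda>x. f (c * x + d))"
  by (rule smooth_derivative_sequence(1)[where D="\<lambda>k x. c ^ k * (deriv ^^ k) f (c * x + d)"])
     (auto intro!: derivative_eq_intros DERIV_chain2[OF smooth_has_iterated_derivative])

lemma Leibniz_sum_step:
  fixes a b :: "nat \<Rightarrow> real"
  shows "(\<Sum>i = 0..n. of_nat (n choose i) * (a (Suc i) * b (n - i) + a i * b (Suc (n - i))))
       = (\<Sum>i = 0..Suc n. of_nat (Suc n choose i) * a i * b (Suc n - i))"
proof -
  have choose: "Suc n choose k = (n choose k) + (if k = 0 then 0 else n choose (k - 1))" for k
    by (cases k) simp_all
  show ?thesis
    apply (simp add: choose algebra_simps sum.distrib)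
    apply (subst (4) sum_Suc_reindex)
    apply (auto simp: algebra_simps Suc_diff_le intro: sum.cong)
    done
qed

lemma smooth_mult:
  assumes f: "smooth f" and g: "smooth g"
  shows "smooth (\<lambda>x. f x * g x)"
proof (rule smooth_derivative_sequence(1)
    [where D="\<lambda>n x. \<Sum>i = 0..n. of_nat (n choose i) * (deriv ^^ i) f x * (deriv ^^ (n - i)) g x"])
  fix n x
  have "((\<lambda>x. \<Sum>i = 0..n. of_nat (n choose i) * (deriv ^^ i) f x * (deriv ^^ (n - i)) g x)
        has_real_derivative (\<Sum>i = 0..n. of_nat (n choose i) *
          ((deriv ^^ Suc i) f x * (deriv ^^ (n - i)) g x + (deriv ^^ i) f x * (deriv ^^ Suc (n - i)) g x))) (at x)"
    by (auto intro!: derivative_eq_intros smooth_has_iterated_derivative f g simp: algebra_simps)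
  then show "((\<lambda>x. \<Sum>i = 0..n. of_nat (n choose i) * (deriv ^^ i) f x * (deriv ^^ (n - i)) g x)
        has_real_derivative (\<Sum>i = 0..Suc n. of_nat (Suc n choose i) * (deriv ^^ i) f x * (deriv ^^ (Suc n - i)) g x)) (at x)"
    using Leibniz_sum_step[of n "\<lambda>i. (deriv ^^ i) f x" "\<lambda>i. (deriv ^^ i) g x"] by simp
qed simp

section \<open>Locally integrable functions\<close>

lemma continuous_imp_borel_measurable: "(\<And>x. isCont f x) \<Longrightarrow> f \<in> borel_measurable borel"
  by (intro borel_measurable_continuous_onI continuous_at_imp_continuous_on) auto

lemma isCont_bounded_on_interval:
  fixes f :: "real \<Rightarrow> real"
  assumes "\<And>x. isCont f x"
  obtains B where "\<And>x. x \<in> {a..b} \<Longrightarrow> \<bar>f x\<bar> \<le> B"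
proof -
  have "compact (f ` {a..b})"
    by (intro compact_continuous_image continuous_at_imp_continuous_on) (auto intro: assms)
  then show thesis
    using that compact_imp_bounded bounded_iff by (metis image_eqI real_norm_def)
qed

lemma loc_int_integrable_indicator:
  "loc_int f \<Longrightarrow> integrable lborel (\<lambda>x. indicator {a..b} x * f x)"
  unfolding loc_int_def set_integrable_def by simp

lemma loc_int_imp_borel_measurable:
  assumes "loc_int f"
  shows "f \<in> borel_measurable borel"
proof (rule borel_measurable_LIMSEQ_real)
  show "(\<lambda>x. indicator {-real i..real i} x * f x) \<in> borel_measurable borel" for i
    using loc_int_integrable_indicator[OF assms] by auto
  fix x :: real
  obtain N :: nat where "\<bar>x\<bar> \<le> real N" using real_arch_simple by blast
  then have "\<forall>\<^sub>F i in sequentially. indicator {-real i..real i} x * f x = f x"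
    unfolding eventually_sequentially by (intro exI[of _ N]) (auto simp: indicator_def)
  then show "(\<lambda>i. indicator {-real i..real i} x * f x) \<longlonglongrightarrow> f x"
    by (rule tendsto_eventually)
qed

lemma continuous_imp_loc_int:
  assumes "\<And>x. isCont f x"
  shows "loc_int f"
proof -
  have "integrable lborel (\<lambda>x. indicator {a..b} x *\<^sub>R f x)" for a b :: real
    by (rule borel_integrable_compact) (auto intro!: continuous_at_imp_continuous_on assms)
  then show ?thesis by (simp add: loc_int_def set_integrable_def)
qed

lemma loc_int_diff: "loc_int f \<Longrightarrow> loc_int g \<Longrightarrow> loc_int (\<lambda>x. f x - g x)"
  unfolding loc_int_def by (auto intro: set_integral_diff(1))

lemma loc_int_interval_integrable:
  assumes "loc_int f"
  shows "interval_lebesgue_integrable lborel (ereal a) (ereal b) f"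
proof -
  have "set_integrable lborel {min a b..max a b} f" using assms by (simp add: loc_int_def)
  then have "set_integrable lborel {min a b<..<max a b} f"
    by (rule set_integrable_subset) auto
  then show ?thesis
    by (auto simp: interval_lebesgue_integrable_def min_def max_def)
qed

lemma interval_integral_sum_loc_int:
  fixes a b c :: real
  assumes "loc_int f"
  shows "(LBINT t=a..b. f t) + (LBINT t=b..c. f t) = (LBINT t=a..c. f t)"
  using loc_int_interval_integrable[OF assms, of "min a (min b c)" "max a (max b c)"]
  by (intro interval_integral_sum) simp

lemma isCont_interval_integral:
  fixes c x :: real and f :: "real \<Rightarrow> real"
  assumes f: "loc_int f"
  shows "isCont (\<lambda>x::real. LBINT t=c..x. f t) x"
proof -
  define N :: real where "N = \<bar>x\<bar> + \<bar>c\<bar> + 1"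
  have "f integrable_on {-N..N}"
    using f by (intro set_borel_integral_eq_integral(1)) (simp add: loc_int_def)
  then have "continuous_on {-N..N} (\<lambda>y. integral {-N..y} f - (LBINT t=-N..c. f t))"
    by (intro continuous_intros indefinite_integral_continuous_1)
  moreover have "integral {-N..y} f - (LBINT t=-N..c. f t) = (LBINT t=c..y. f t)" if "y \<in> {-N..N}" for y
    using interval_integral_sum_loc_int[OF f, of "-N" c y] that f
    by (simp add: interval_integral_eq_integral loc_int_def)
  ultimately have "continuous_on {-N..N} (\<lambda>y. LBINT t=c..y. f t)"
    by (rule continuous_on_eq) auto
  moreover have "x \<in> interior {-N..N}" unfolding N_def by auto
  ultimately show ?thesis by (rule continuous_on_interior)
qed

lemma has_real_derivative_interval_integral:
  fixes c :: real
  assumes "\<And>x. isCont g x"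
  shows "((\<lambda>x. LBINT t=c..x. g t) has_real_derivative g x) (at x)"
proof -
  have "((\<lambda>x. LBINT t=c..x. g t) has_vector_derivative g x) (at x within {min c x - 1..max c x + 1})"
    by (rule interval_integral_FTC2) (auto intro: continuous_at_imp_continuous_on assms)
  then show ?thesis
    by (subst (asm) at_within_Icc_at) (auto simp: has_real_derivative_iff_has_vector_derivative)
qed

lemma loc_int_integrable_mult_compact_support:
  assumes "loc_int f" "\<And>x. isCont g x" "\<And>x. \<bar>g x\<bar> \<le> B" "\<And>x. x \<notin> {a..b} \<Longrightarrow> g x = 0"
  shows "integrable lborel (\<lambda>x. f x * g x)"
proof (rule Bochner_Integration.integrable_bound)
  show "integrable lborel (\<lambda>x. B * (indicator {a..b} x * f x))"
    using loc_int_integrable_indicator[OF assms(1)] by auto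
  have [measurable]: "f \<in> borel_measurable borel" "g \<in> borel_measurable borel"
    using loc_int_imp_borel_measurable[OF assms(1)] continuous_imp_borel_measurable[OF assms(2)] by auto
  show "(\<lambda>x. f x * g x) \<in> borel_measurable lborel" by simp
  have "\<bar>f x * g x\<bar> \<le> \<bar>B * (indicator {a..b} x * f x)\<bar>" for x
    using assms(3)[of x] assms(4)[of x]
    by (cases "x \<in> {a..b}") (auto simp: abs_mult mult.commute[of B] intro: mult_left_mono)
  then show "AE x in lborel. norm (f x * g x) \<le> norm (B * (indicator {a..b} x * f x))"
    by simp
qed

text \<open>The positive and negative parts of \<open>f\<close> are densities of two measures that agree on all
  half-lines, hence coincide.\<close>
lemma AE_zero_if_integrals_greaterThan_zero:
  fixes f :: "real \<Rightarrow> real"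
  assumes f: "integrable lborel f" and tails: "\<And>x. (LINT y|lborel. f y * indicator {x<..} y) = 0"
  shows "AE x in lborel. f x = 0"
proof -
  have [measurable]: "f \<in> borel_measurable borel" using f by auto
  define pos neg where "pos y = max 0 (f y)" and "neg y = max 0 (- f y)" for y
  have [measurable]: "pos \<in> borel_measurable borel" "neg \<in> borel_measurable borel"
    by (simp_all add: pos_def[abs_def] neg_def[abs_def])
  have int: "integrable lborel (\<lambda>y. g y * indicator {x<..} y)" if "g \<in> {pos, neg}" for g x
    using that f by (auto simp: pos_def[abs_def] neg_def[abs_def] intro!: integrable_real_mult_indicator integrable_max)
  have tail_measure: "emeasure (density lborel g) {x<..} = ennreal (LINT y|lborel. g y * indicator {x<..} y)"
    if "g \<in> {pos, neg}" for g x
  proof -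
    have nonneg: "0 \<le> g y" for y using that by (auto simp: pos_def neg_def)
    have "emeasure (density lborel g) {x<..} = (\<integral>\<^sup>+ y. ennreal (g y * indicator {x<..} y) \<partial>lborel)"
      using that by (subst emeasure_density) (auto intro!: nn_integral_cong simp: indicator_def)
    also have "\<dots> = ennreal (LINT y|lborel. g y * indicator {x<..} y)"
      using int[OF that] nonneg by (intro nn_integral_eq_integral) auto
    finally show ?thesis .
  qed
  have "density lborel pos = density lborel neg"
  proof (rule measure_eqI_lessThan)
    fix x
    show "emeasure (density lborel pos) {x<..} < \<infinity>" by (simp add: tail_measure)
    have "(LINT y|lborel. pos y * indicator {x<..} y) - (LINT y|lborel. neg y * indicator {x<..} y)
        = (LINT y|lborel. pos y * indicator {x<..} y - neg y * indicator {x<..} y)"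
      using int[of pos x] int[of neg x] by simp
    also have "\<dots> = (LINT y|lborel. f y * indicator {x<..} y)"
      by (rule Bochner_Integration.integral_cong) (auto simp: pos_def neg_def max_def indicator_def)
    finally show "emeasure (density lborel pos) {x<..} = emeasure (density lborel neg) {x<..}"
      using tails[of x] by (simp add: tail_measure)
  qed simp_all
  then have "AE y in lborel. ennreal (pos y) = ennreal (neg y)"
    by (intro sigma_finite_measure.density_unique[OF sigma_finite_lborel]) simp_all
  then show ?thesis
    by eventually_elim (auto simp: pos_def neg_def max_def split: if_splits)
qed

lemma loc_int_AE_zero_if_interval_integrals_zero:
  fixes f :: "real \<Rightarrow> real"
  assumes f: "loc_int f" and zero: "\<And>a b. a \<le> b \<Longrightarrow> (LBINT x=ereal a..ereal b. f x) = 0"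
  shows "AE x in lborel. f x = 0"
proof -
  have "AE x in lborel. indicator {-real N..real N} x * f x = 0" for N :: nat
  proof (rule AE_zero_if_integrals_greaterThan_zero)
    show "integrable lborel (\<lambda>x. indicator {-real N..real N} x * f x)"
      by (rule loc_int_integrable_indicator[OF f])
    fix x
    have "(LINT y|lborel. indicator {-real N..real N} y * f y * indicator {x<..} y)
        = (LBINT y:{-real N..real N} \<inter> {x<..}. f y)"
      by (auto simp: set_lebesgue_integral_def indicator_def intro!: Bochner_Integration.integral_cong)
    also have "\<dots> = 0"
    proof -
      consider "x < -real N" | "-real N \<le> x" "x < real N" | "real N \<le> x" by linarith
      then show ?thesis
      proof cases
        case 1
        then have "{-real N..real N} \<inter> {x<..} = {-real N..real N}" by auto
        then show ?thesis using zero[of "-real N" "real N"] by (simp add: interval_integral_Icc)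
      next
        case 2
        then have "{-real N..real N} \<inter> {x<..} = {x<..real N}" by auto
        then show ?thesis using zero[of x "real N"] 2 by (simp add: interval_integral_Ioc)
      next
        case 3
        then have "{-real N..real N} \<inter> {x<..} = {}" by auto
        then show ?thesis by (simp add: set_lebesgue_integral_def)
      qed
    qed
    finally show "(LINT y|lborel. indicator {-real N..real N} y * f y * indicator {x<..} y) = 0" .
  qed
  then have "AE x in lborel. \<forall>N::nat. indicator {-real N..real N} x * f x = 0"
    by (subst AE_all_countable) blast
  then show ?thesis
  proof eventually_elim
    case (elim x)
    obtain N :: nat where "\<bar>x\<bar> \<le> real N" using real_arch_simple by blast
    then show ?case using elim[rule_format, of N] by (auto simp: indicator_def)
  qed
qed

section \<open>Smooth cutoff functions\<close>

lemma tendsto_poly_times_exp_neg: "((\<lambda>t. poly q t * exp (-t)) \<longlongrightarrow> (0::real)) at_top"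
proof -
  have "((\<lambda>t. \<Sum>i\<le>degree q. coeff q i * (t ^ i / exp t)) \<longlongrightarrow> (\<Sum>i\<le>degree q. coeff q i * 0)) at_top"
    by (intro tendsto_intros tendsto_power_div_exp_0)
  moreover have "poly q t * exp (-t) = (\<Sum>i\<le>degree q. coeff q i * (t ^ i / exp t))" for t
    by (simp add: poly_altdef sum_distrib_right exp_minus divide_inverse mult.assoc)
  ultimately show ?thesis by simp
qed

definition exp_neg_inv :: "real \<Rightarrow> real" where
  "exp_neg_inv x = (if x > 0 then exp (-1/x) else 0)"

fun exp_neg_inv_poly :: "nat \<Rightarrow> real poly" where
  "exp_neg_inv_poly 0 = 1"
| "exp_neg_inv_poly (Suc k) = [:0, 0, 1:] * (exp_neg_inv_poly k - pderiv (exp_neg_inv_poly k))"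

definition exp_neg_inv_deriv :: "nat \<Rightarrow> real \<Rightarrow> real" where
  "exp_neg_inv_deriv k x = (if x > 0 then poly (exp_neg_inv_poly k) (1/x) * exp (-1/x) else 0)"

lemma exp_neg_inv_deriv_over_x_tendsto_0: "((\<lambda>y. exp_neg_inv_deriv k y / y) \<longlongrightarrow> 0) (at (0::real))"
proof (rule filterlim_split_at)
  show "((\<lambda>y. exp_neg_inv_deriv k y / y) \<longlongrightarrow> 0) (at_left (0::real))"
    by (rule tendsto_eventually)
       (use eventually_at_left_real[of "-1" 0] in \<open>force elim: eventually_mono simp: exp_neg_inv_deriv_def\<close>)
  have "((\<lambda>y. poly ([:0, 1:] * exp_neg_inv_poly k) (inverse y) * exp (- inverse y)) \<longlongrightarrow> 0) (at_right (0::real))"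
    by (rule filterlim_compose[OF tendsto_poly_times_exp_neg filterlim_inverse_at_top_right])
  then show "((\<lambda>y. exp_neg_inv_deriv k y / y) \<longlongrightarrow> 0) (at_right (0::real))"
    by (rule Lim_transform_eventually)
       (use eventually_at_right_real[of 0 1] in
         \<open>force elim: eventually_mono simp: exp_neg_inv_deriv_def field_simps\<close>)
qed

lemma has_real_derivative_exp_neg_inv_deriv:
  "(exp_neg_inv_deriv k has_real_derivative exp_neg_inv_deriv (Suc k) x) (at x)"
proof -
  consider "x > 0" | "x < 0" | "x = 0" by linarith
  then show ?thesis
  proof cases
    case 1
    have "((\<lambda>x. poly (exp_neg_inv_poly k) (1/x) * exp (-1/x)) has_real_derivative
          exp_neg_inv_deriv (Suc k) x) (at x)"
      using 1 by (auto intro!: derivative_eq_intros DERIV_chain2[OF poly_DERIV]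
                       simp: exp_neg_inv_deriv_def field_simps power2_eq_square)
    then show ?thesis
      by (rule has_field_derivative_transform_within_open[of _ _ _ "{0<..}"])
         (use 1 in \<open>auto simp: exp_neg_inv_deriv_def\<close>)
  next
    case 2
    have "((\<lambda>x. 0) has_real_derivative exp_neg_inv_deriv (Suc k) x) (at x)"
      using 2 by (auto simp: exp_neg_inv_deriv_def)
    then show ?thesis
      by (rule has_field_derivative_transform_within_open[of _ _ _ "{..<0}"])
         (use 2 in \<open>auto simp: exp_neg_inv_deriv_def\<close>)
  next
    case 3
    then show ?thesis
      using exp_neg_inv_deriv_over_x_tendsto_0[of k]
      by (simp add: has_field_derivative_iff exp_neg_inv_deriv_def)
  qed
qed

lemma smooth_exp_neg_inv: "smooth exp_neg_inv"
proof (rule smooth_derivative_sequence(1)[where D=exp_neg_inv_deriv])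
  show "exp_neg_inv_deriv 0 = exp_neg_inv"
    by (auto simp: exp_neg_inv_deriv_def exp_neg_inv_def fun_eq_iff)
qed (rule has_real_derivative_exp_neg_inv_deriv)

definition bump :: "real \<Rightarrow> real" where
  "bump x = exp_neg_inv x * exp_neg_inv (1 - x)"

lemma smooth_bump: "smooth bump"
  using smooth_mult[OF smooth_exp_neg_inv smooth_compose_affine[OF smooth_exp_neg_inv, of "-1" 1]]
  by (simp add: bump_def[abs_def])

lemma bump_nonneg: "bump x \<ge> 0"
  by (simp add: bump_def exp_neg_inv_def)

lemma bump_eq_0: "x \<le> 0 \<or> 1 \<le> x \<Longrightarrow> bump x = 0"
  by (auto simp: bump_def exp_neg_inv_def)

lemma bump_pos: "0 < x \<Longrightarrow> x < 1 \<Longrightarrow> bump x > 0"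
  by (simp add: bump_def exp_neg_inv_def)

definition bump_primitive :: "real \<Rightarrow> real" where
  "bump_primitive x = (LBINT t=0..x. bump t)"

lemma has_real_derivative_bump_primitive: "(bump_primitive has_real_derivative bump x) (at x)"
  unfolding bump_primitive_def
  using has_real_derivative_interval_integral[OF smooth_imp_isCont[OF smooth_bump], of 0]
  by (simp add: zero_ereal_def)

lemma bump_primitive_mono: "x \<le> y \<Longrightarrow> bump_primitive x \<le> bump_primitive y"
  using DERIV_nonneg_imp_nondecreasing has_real_derivative_bump_primitive bump_nonneg by blast

lemma bump_primitive_nonpos: "x \<le> 0 \<Longrightarrow> bump_primitive x = 0"
  unfolding bump_primitive_def
  by (subst interval_integral_endpoints_reverse, subst interval_integral_cong[where g="\<lambda>_. 0"])
     (auto simp: einterval_iff intro!: bump_eq_0)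

lemma bump_primitive_ge_1: "1 \<le> x \<Longrightarrow> bump_primitive x = bump_primitive 1"
proof -
  assume x: "1 \<le> x"
  have "bump_primitive 1 + (LBINT t=1..x. bump t) = bump_primitive x"
    unfolding bump_primitive_def
    using interval_integral_sum_loc_int[of bump 0 1 x]
          continuous_imp_loc_int[OF smooth_imp_isCont[OF smooth_bump]]
    by (simp add: zero_ereal_def one_ereal_def)
  moreover have "(LBINT t=1..x. bump t) = 0"
    using x by (subst interval_integral_cong[where g="\<lambda>_. 0"]) (auto simp: einterval_iff min_def max_def intro!: bump_eq_0)
  ultimately show ?thesis by simp
qed

lemma bump_primitive_1_pos: "bump_primitive 1 > 0"
proof -
  have "continuous_on {0..1} bump"
    by (auto intro: continuous_at_imp_continuous_on smooth_imp_isCont[OF smooth_bump])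
  then have "integral {0..1} bump \<noteq> 0"
    using integral_eq_0_iff[of 0 1 bump] bump_nonneg bump_pos[of "1/2"] by force
  moreover have "bump_primitive 1 = integral {0..1} bump"
    unfolding bump_primitive_def
    using interval_integral_eq_integral[of 0 1 bump]
          continuous_imp_loc_int[OF smooth_imp_isCont[OF smooth_bump]]
    by (simp add: loc_int_def zero_ereal_def)
  moreover have "bump_primitive 1 \<ge> 0"
    using bump_primitive_mono[of 0 1] bump_primitive_nonpos[of 0] by simp
  ultimately show ?thesis by linarith
qed

definition smooth_step :: "real \<Rightarrow> real" where
  "smooth_step x = bump_primitive x / bump_primitive 1"

lemma smooth_smooth_step: "smooth smooth_step"
  using smooth_cmult[OF smooth_antiderivative(1)[OF smooth_bump has_real_derivative_bump_primitive],
      of "1 / bump_primitive 1"]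
  by (simp add: smooth_step_def[abs_def])

lemma smooth_step_eq_0: "x \<le> 0 \<Longrightarrow> smooth_step x = 0"
  by (simp add: smooth_step_def bump_primitive_nonpos)

lemma smooth_step_eq_1: "1 \<le> x \<Longrightarrow> smooth_step x = 1"
  using bump_primitive_1_pos bump_primitive_ge_1[of x] by (simp add: smooth_step_def)

lemma smooth_step_bounds: "0 \<le> smooth_step x" "smooth_step x \<le> 1"
proof -
  have "0 \<le> bump_primitive x"
    using bump_primitive_mono[of 0 x] bump_primitive_nonpos[of x] bump_primitive_nonpos[of 0]
    by (cases "x \<le> 0") auto
  moreover have "bump_primitive x \<le> bump_primitive 1"
    using bump_primitive_mono[of x 1] bump_primitive_ge_1[of x] by (cases "1 \<le> x") auto
  ultimately show "0 \<le> smooth_step x" "smooth_step x \<le> 1"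
    using bump_primitive_1_pos by (auto simp: smooth_step_def)
qed

text \<open>For \<open>a \<le> b\<close> and \<open>n \<ge> 1\<close>, \<open>cutoff n a b\<close> equals 1 on \<open>[a, b]\<close> and vanishes outside
  \<open>[a - 1/n, b + 1/n]\<close>.\<close>
definition cutoff :: "real \<Rightarrow> real \<Rightarrow> real \<Rightarrow> real \<Rightarrow> real" where
  "cutoff n a b x = smooth_step (n * (x - a) + 1) - smooth_step (n * (x - b))"

lemma smooth_cutoff: "smooth (cutoff n a b)"
proof -
  have "smooth (\<lambda>x. smooth_step (n * x + (1 - n * a)) - smooth_step (n * x + - (n * b)))"
    by (intro smooth_diff smooth_compose_affine smooth_smooth_step)
  moreover have "cutoff n a b = (\<lambda>x. smooth_step (n * x + (1 - n * a)) - smooth_step (n * x + - (n * b)))"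
    by (auto simp: cutoff_def fun_eq_iff algebra_simps)
  ultimately show ?thesis by simp
qed

lemma cutoff_bounded: "\<bar>cutoff n a b x\<bar> \<le> 1"
  using smooth_step_bounds[of "n * (x - a) + 1"] smooth_step_bounds[of "n * (x - b)"]
  by (auto simp: cutoff_def)

lemma cutoff_eq_0:
  assumes "a \<le> b" "1 \<le> n" "x \<notin> {a - 1..b + 1}"
  shows "cutoff n a b x = 0"
proof (cases "x < a - 1")
  case True
  have "n * (x - a) \<le> x - a" using True assms mult_right_mono_neg[of 1 n "x - a"] by simp
  then have "n * (x - a) + 1 \<le> 0" using True by linarith
  moreover have "n * (x - b) \<le> 0" using True assms by (intro mult_nonneg_nonpos) auto
  ultimately show ?thesis by (simp add: cutoff_def smooth_step_eq_0)
next
  case False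
  then have "b + 1 < x" using assms by auto
  then have "x - b \<le> n * (x - b)" using assms mult_right_mono[of 1 n "x - b"] by simp
  then have "1 \<le> n * (x - b)" using \<open>b + 1 < x\<close> by linarith
  moreover have "0 \<le> n * (x - a)" using \<open>b + 1 < x\<close> assms by simp
  ultimately show ?thesis by (simp add: cutoff_def smooth_step_eq_1)
qed

lemma eventually_Suc_times_ge_1:
  fixes d :: real
  assumes "0 < d"
  shows "\<forall>\<^sub>F m in sequentially. 1 \<le> real (Suc m) * d"
proof -
  obtain N :: nat where N: "1 / d \<le> real N" using real_arch_simple by blast
  have "1 \<le> real (Suc m) * d" if "N \<le> m" for m
  proof -
    have "1 / d \<le> real (Suc m)" using N that by linarith
    then show ?thesis using assms by (simp add: divide_le_eq)
  qed
  then show ?thesis unfolding eventually_sequentially by blast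
qed

lemma cutoff_tendsto_indicator:
  assumes "a \<le> b"
  shows "(\<lambda>m. cutoff (real (Suc m)) a b x) \<longlonglongrightarrow> indicator {a..b} x"
proof (rule tendsto_eventually)
  consider "x < a" | "x \<in> {a..b}" | "b < x" by force
  then show "\<forall>\<^sub>F m in sequentially. cutoff (real (Suc m)) a b x = indicator {a..b} x"
  proof cases
    case 1
    have "\<forall>\<^sub>F m in sequentially. 1 \<le> real (Suc m) * (a - x)" using 1 by (intro eventually_Suc_times_ge_1) simp
    then show ?thesis
    proof eventually_elim
      case (elim m)
      have "real (Suc m) * (x - a) + 1 \<le> 0" using elim by (simp add: right_diff_distrib)
      moreover have "real (Suc m) * (x - b) \<le> 0" using 1 assms by (intro mult_nonneg_nonpos) auto
      ultimately show ?case using 1 by (simp add: cutoff_def smooth_step_eq_0)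
    qed
  next
    case 2
    then have "1 \<le> real (Suc m) * (x - a) + 1" "real (Suc m) * (x - b) \<le> 0" for m
      by (auto intro: mult_nonneg_nonpos)
    then show ?thesis using 2 by (simp add: cutoff_def smooth_step_eq_0 smooth_step_eq_1)
  next
    case 3
    have "\<forall>\<^sub>F m in sequentially. 1 \<le> real (Suc m) * (x - b)" using 3 by (intro eventually_Suc_times_ge_1) simp
    then show ?thesis
    proof eventually_elim
      case (elim m)
      have "1 \<le> real (Suc m) * (x - a) + 1" using 3 assms by simp
      then show ?case using elim 3 by (simp add: cutoff_def smooth_step_eq_1)
    qed
  qed
qed

lemma integrable_mult_cutoff:
  "loc_int f \<Longrightarrow> a \<le> b \<Longrightarrow> 1 \<le> n \<Longrightarrow> integrable lborel (\<lambda>x. f x * cutoff n a b x)"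
  by (rule loc_int_integrable_mult_compact_support[OF _ smooth_imp_isCont[OF smooth_cutoff] cutoff_bounded])
     (auto intro: cutoff_eq_0)

lemma tendsto_integral_cutoff:
  assumes f: "loc_int f" and "a \<le> b"
  shows "(\<lambda>m. LINT x|lborel. f x * cutoff (real (Suc m)) a b x) \<longlonglongrightarrow> (LBINT x=a..b. f x)"
proof -
  have [measurable]: "f \<in> borel_measurable borel" "cutoff n a b \<in> borel_measurable borel" for n
    using loc_int_imp_borel_measurable[OF f]
          continuous_imp_borel_measurable[OF smooth_imp_isCont[OF smooth_cutoff]] by auto
  have "(\<lambda>m. LINT x|lborel. f x * cutoff (real (Suc m)) a b x) \<longlonglongrightarrow> (LINT x|lborel. f x * indicator {a..b} x)"
  proof (rule integral_dominated_convergence[where w="\<lambda>x. \<bar>indicator {a - 1..b + 1} x * f x\<bar>"])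
    show "integrable lborel (\<lambda>x. \<bar>indicator {a - 1..b + 1} x * f x\<bar>)"
      by (rule integrable_abs[OF loc_int_integrable_indicator[OF f]])
    show "AE x in lborel. (\<lambda>m. f x * cutoff (real (Suc m)) a b x) \<longlonglongrightarrow> f x * indicator {a..b} x"
      by (intro AE_I2 tendsto_mult_left cutoff_tendsto_indicator assms)
    have "\<bar>f x * cutoff (real (Suc m)) a b x\<bar> \<le> \<bar>indicator {a - 1..b + 1} x * f x\<bar>" for m x
      using cutoff_bounded[of "real (Suc m)" a b x] cutoff_eq_0[OF \<open>a \<le> b\<close>, of "real (Suc m)" x]
      by (cases "x \<in> {a - 1..b + 1}") (auto simp: abs_mult intro: mult_left_le)
    then show "AE x in lborel. norm (f x * cutoff (real (Suc m)) a b x) \<le> \<bar>indicator {a - 1..b + 1} x * f x\<bar>" for m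
      by simp
  qed simp_all
  then show ?thesis
    using \<open>a \<le> b\<close> by (simp add: interval_integral_Icc set_lebesgue_integral_def mult.commute)
qed

section \<open>Test functions and weak derivatives\<close>

lemma test_fun_iff: "test_fun \<phi> \<longleftrightarrow> smooth \<phi> \<and> (\<exists>R. \<forall>x. R < \<bar>x\<bar> \<longrightarrow> \<phi> x = 0)"
  unfolding test_fun_def smooth_def ..

lemma deriv_eq_0_outside:
  fixes \<phi> :: "real \<Rightarrow> real"
  assumes "\<forall>x. R < \<bar>x\<bar> \<longrightarrow> \<phi> x = 0" "R < \<bar>x\<bar>"
  shows "deriv \<phi> x = 0"
proof -
  have "((\<lambda>x. 0) has_real_derivative 0) (at x)" by simp
  then have "(\<phi> has_real_derivative 0) (at x)"
    by (rule has_field_derivative_transform_within_open[of _ _ _ "{y. R < \<bar>y\<bar>}"])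
       (use assms in \<open>auto intro!: open_Collect_less continuous_intros\<close>)
  then show ?thesis by (rule DERIV_imp_deriv)
qed

lemma test_fun_deriv: "test_fun \<phi> \<Longrightarrow> test_fun (deriv \<phi>)"
  unfolding test_fun_iff using smooth_deriv deriv_eq_0_outside by blast

lemma test_funE:
  assumes "test_fun \<phi>"
  obtains R B where "\<And>x. isCont \<phi> x" "\<And>x. \<bar>\<phi> x\<bar> \<le> B" "\<And>x. x \<notin> {-R..R} \<Longrightarrow> \<phi> x = 0"
proof -
  obtain R where R: "\<forall>x. R < \<bar>x\<bar> \<longrightarrow> \<phi> x = 0" and "smooth \<phi>"
    using assms test_fun_iff by blast
  have cont: "isCont \<phi> x" for x using \<open>smooth \<phi>\<close> by (rule smooth_imp_isCont)
  then obtain B where "\<And>x. x \<in> {-R..R} \<Longrightarrow> \<bar>\<phi> x\<bar> \<le> B"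
    using isCont_bounded_on_interval by blast
  moreover have zero: "\<phi> x = 0" if "x \<notin> {-R..R}" for x using R that by auto
  ultimately have bound: "\<bar>\<phi> x\<bar> \<le> \<bar>B\<bar>" for x by (cases "x \<in> {-R..R}") force+
  show thesis by (rule that[OF cont bound zero])
qed

lemma integrable_mult_test_fun: "loc_int f \<Longrightarrow> test_fun \<phi> \<Longrightarrow> integrable lborel (\<lambda>x. f x * \<phi> x)"
  by (elim test_funE) (rule loc_int_integrable_mult_compact_support)

lemma interval_integral_deriv_smooth:
  assumes "smooth \<phi>"
  shows "(LBINT x=a..b. deriv \<phi> x) = \<phi> b - \<phi> a"
proof (rule interval_integral_FTC_finite)
  show "continuous_on {min a b..max a b} (deriv \<phi>)"
    by (intro continuous_at_imp_continuous_on ballI smooth_imp_isCont smooth_deriv assms)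
  show "(\<phi> has_vector_derivative deriv \<phi> x) (at x within {min a b..max a b})" for x
    using smooth_has_derivative[OF assms, of x]
    by (simp add: has_real_derivative_iff_has_vector_derivative[symmetric] has_field_derivative_at_within)
qed

lemma integral_deriv_test_fun:
  assumes "test_fun \<phi>"
  shows "(LINT x|lborel. deriv \<phi> x) = 0"
proof -
  obtain R where R: "\<forall>x. R < \<bar>x\<bar> \<longrightarrow> \<phi> x = 0" and sm: "smooth \<phi>"
    using assms test_fun_iff by blast
  define M where "M = \<bar>R\<bar> + 1"
  have "(\<lambda>x. indicator {-M..M} x * deriv \<phi> x) = deriv \<phi>"
  proof
    show "indicator {-M..M} x * deriv \<phi> x = deriv \<phi> x" for x
      using deriv_eq_0_outside[OF R, of x] by (cases "R < \<bar>x\<bar>") (auto simp: M_def indicator_def)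
  qed
  then have "(LINT x|lborel. deriv \<phi> x) = (LBINT x=-M..M. deriv \<phi> x)"
    by (simp add: M_def interval_integral_Icc set_lebesgue_integral_def)
  also have "\<dots> = \<phi> M - \<phi> (-M)" by (rule interval_integral_deriv_smooth[OF sm])
  finally show ?thesis using R by (simp add: M_def)
qed

lemma test_fun_primitive:
  fixes a b :: real
  assumes g: "smooth g" and supp: "\<And>x. x \<notin> {a..b} \<Longrightarrow> g x = 0" and zero: "(LINT x|lborel. g x) = 0"
  shows "test_fun (\<lambda>x. LBINT t=a..x. g t)" "deriv (\<lambda>x. LBINT t=a..x. g t) = g"
proof -
  have has_deriv: "((\<lambda>x. LBINT t=a..x. g t) has_real_derivative g x) (at x)" for x
    by (rule has_real_derivative_interval_integral) (rule smooth_imp_isCont[OF g])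
  then show "deriv (\<lambda>x. LBINT t=a..x. g t) = g" by (rule smooth_antiderivative(2)[OF g])
  have "(LBINT t=a..x. g t) = 0" if x: "\<bar>a\<bar> + \<bar>b\<bar> < \<bar>x\<bar>" for x
  proof (cases "x < a")
    case True
    then show ?thesis
      by (subst interval_integral_endpoints_reverse, subst interval_integral_cong[where g="\<lambda>_. 0"])
         (auto simp: einterval_iff intro!: supp)
  next
    case False
    then have "b < x" "a \<le> x" using x by auto
    then have "(\<lambda>t. indicator {a..x} t * g t) = g"
      using supp by (force simp: indicator_def)
    then have "(LBINT t=a..x. g t) = (LINT t|lborel. g t)"
      using \<open>a \<le> x\<close> by (simp add: interval_integral_Icc set_lebesgue_integral_def)
    then show ?thesis using zero by simp
  qed
  then show "test_fun (\<lambda>x. LBINT t=a..x. g t)"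
    unfolding test_fun_iff using smooth_antiderivative(1)[OF g has_deriv] by blast
qed

lemma integrable_triangle:
  fixes f g :: "real \<Rightarrow> real" and M :: real
  assumes f: "loc_int f" and g: "\<And>x. isCont g x"
  shows "integrable (lborel \<Otimes>\<^sub>M lborel) (\<lambda>(x, t). if -M \<le> t \<and> t \<le> x \<and> x \<le> M then f t * g x else 0)"
proof -
  have [measurable]: "f \<in> borel_measurable borel" "g \<in> borel_measurable borel"
    using loc_int_imp_borel_measurable[OF f] continuous_imp_borel_measurable[OF g] by auto
  obtain B where B: "\<And>x. x \<in> {-M..M} \<Longrightarrow> \<bar>g x\<bar> \<le> B"
    using isCont_bounded_on_interval[OF g] by blast
  define P where "P = (\<lambda>(x, t). B * indicator {-M..M} x * (indicator {-M..M} t * \<bar>f t\<bar>))"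
  have P: "integrable (lborel \<Otimes>\<^sub>M lborel) P"
  proof (rule lborel_pair.Fubini_integrable)
    have "integrable lborel (\<lambda>t. indicator {-M..M} t * \<bar>f t\<bar>)"
      using integrable_abs[OF loc_int_integrable_indicator[OF f, of "-M" M]]
      by (simp add: abs_mult)
    then show "AE x in lborel. integrable lborel (\<lambda>t. P (x, t))"
      by (auto simp: P_def)
    have "(\<lambda>x. LINT t|lborel. norm (P (x, t)))
        = (\<lambda>x. indicator {-M..M} x * (\<bar>B\<bar> * (LINT t|lborel. indicator {-M..M} t * \<bar>f t\<bar>)))"
      by (auto simp: P_def abs_mult fun_eq_iff indicator_def)
    then show "integrable lborel (\<lambda>x. LINT t|lborel. norm (P (x, t)))"
      by (simp add: integrable_real_mult_indicator emeasure_lborel_Icc_eq)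
  qed (simp add: P_def)
  show ?thesis
  proof (rule Bochner_Integration.integrable_bound[OF P])
    have "\<bar>f t * g x\<bar> \<le> \<bar>P (x, t)\<bar>" if "-M \<le> t" "t \<le> x" "x \<le> M" for x t
      using that B[of x] by (auto simp: P_def abs_mult mult.commute[of B] intro: mult_left_mono)
    then show "AE p in lborel \<Otimes>\<^sub>M lborel.
        norm ((\<lambda>(x, t). if -M \<le> t \<and> t \<le> x \<and> x \<le> M then f t * g x else 0) p) \<le> norm (P p)"
      by (intro AE_I2) (auto simp: P_def)
  qed simp
qed

lemma Fubini_triangle:
  fixes f g :: "real \<Rightarrow> real" and M :: real
  assumes f: "loc_int f" and g: "\<And>x. isCont g x"
  shows "(LINT x|lborel. indicator {-M..M} x * (LBINT t=-M..x. f t) * g x)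
       = (LINT t|lborel. indicator {-M..M} t * f t * (LBINT x=t..M. g x))"
    and "integrable lborel (\<lambda>x. indicator {-M..M} x * (LBINT t=-M..x. f t) * g x)"
proof -
  define F where "F x t = (if -M \<le> t \<and> t \<le> x \<and> x \<le> M then f t * g x else 0)" for x t
  have F: "integrable (lborel \<Otimes>\<^sub>M lborel) (\<lambda>(x, t). F x t)"
    unfolding F_def by (rule integrable_triangle[OF f g])
  have inner_t: "(LINT t|lborel. F x t) = indicator {-M..M} x * (LBINT t=-M..x. f t) * g x" for x
  proof (cases "x \<in> {-M..M}")
    case True
    then have "(LINT t|lborel. F x t) = (LINT t|lborel. indicator {-M..x} t * f t) * g x"
      by (subst integral_mult_left_zero[symmetric], intro Bochner_Integration.integral_cong)
         (auto simp: F_def indicator_def)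
    with True show ?thesis by (simp add: interval_integral_Icc set_lebesgue_integral_def)
  next
    case False
    then have "F x = (\<lambda>_. 0)" by (auto simp: F_def)
    with False show ?thesis by simp
  qed
  have inner_x: "(LINT x|lborel. F x t) = indicator {-M..M} t * f t * (LBINT x=t..M. g x)" for t
  proof (cases "t \<in> {-M..M}")
    case True
    then have "(LINT x|lborel. F x t) = f t * (LINT x|lborel. indicator {t..M} x * g x)"
      by (subst integral_mult_right_zero[symmetric], intro Bochner_Integration.integral_cong)
         (auto simp: F_def indicator_def)
    with True show ?thesis by (simp add: interval_integral_Icc set_lebesgue_integral_def)
  next
    case False
    then have "(\<lambda>x. F x t) = (\<lambda>_. 0)" by (auto simp: F_def)
    with False show ?thesis by simp
  qed
  show "(LINT x|lborel. indicator {-M..M} x * (LBINT t=-M..x. f t) * g x)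
      = (LINT t|lborel. indicator {-M..M} t * f t * (LBINT x=t..M. g x))"
    using lborel_pair.Fubini_integral[OF F] by (simp add: inner_t inner_x)
  show "integrable lborel (\<lambda>x. indicator {-M..M} x * (LBINT t=-M..x. f t) * g x)"
    using lborel_pair.integrable_fst'[OF F] by (simp add: inner_t)
qed

definition primitive :: "real \<Rightarrow> (real \<Rightarrow> real) \<Rightarrow> real \<Rightarrow> real" where
  "primitive c g x = c + (LBINT t=0..x. g t)"

lemma isCont_primitive: "loc_int g \<Longrightarrow> isCont (primitive c g) x"
  unfolding primitive_def[abs_def] using isCont_interval_integral[where c=0 and f=g]
  by (intro continuous_intros) (simp add: zero_ereal_def)

lemma has_real_derivative_primitive:
  "(\<And>x. isCont g x) \<Longrightarrow> (primitive c g has_real_derivative g x) (at x)"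
  unfolding primitive_def[abs_def]
  using DERIV_add[OF DERIV_const has_real_derivative_interval_integral, of g c 0]
  by (simp add: zero_ereal_def)

lemma primitive_diff:
  "loc_int g \<Longrightarrow> primitive c g y - primitive c g x = (LBINT t=x..y. g t)"
  using interval_integral_sum_loc_int[of g 0 x y] interval_integral_endpoints_reverse[of 0 x g]
  by (simp add: primitive_def zero_ereal_def)

lemma primitive_cong_AE:
  assumes "f \<in> borel_measurable borel" "g \<in> borel_measurable borel" "AE x in lborel. f x = g x"
  shows "primitive c f = primitive c g"
proof -
  have "(LBINT t=0..x. f t) = (LBINT t=0..x. g t)" for x
    by (rule interval_integral_cong_AE) (use assms in \<open>auto elim: AE_mp\<close>)
  then show ?thesis by (simp add: primitive_def[abs_def])
qed

lemma integral_primitive_times_deriv: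
  assumes g: "loc_int g" and phi: "test_fun \<phi>"
  shows "(LINT x|lborel. primitive c g x * deriv \<phi> x) = - (LINT x|lborel. g x * \<phi> x)"
proof -
  obtain R where R: "\<forall>x. R < \<bar>x\<bar> \<longrightarrow> \<phi> x = 0" and sm: "smooth \<phi>"
    using phi test_fun_iff by blast
  define M where "M = \<bar>R\<bar> + 1"
  have outside: "\<phi> x = 0" "deriv \<phi> x = 0" if "x \<notin> {-M..M}" for x
    using R deriv_eq_0_outside[OF R, of x] that by (auto simp: M_def)
  have cont: "isCont (deriv \<phi>) x" for x by (intro smooth_imp_isCont smooth_deriv sm)
  note Fubini = Fubini_triangle[OF g cont, of M]
  define C where "C = c - (LBINT t=-M..0. g t)"
  have split: "(LBINT t=0..x. g t) = (LBINT t=-M..x. g t) - (LBINT t=-M..0. g t)" for x :: real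
    using interval_integral_sum_loc_int[OF g, of "-M" 0 x] by (simp add: zero_ereal_def)
  have pointwise: "primitive c g x * deriv \<phi> x
      = indicator {-M..M} x * (LBINT t=-M..x. g t) * deriv \<phi> x + C * deriv \<phi> x" for x
    by (cases "x \<in> {-M..M}") (simp_all add: primitive_def C_def split outside algebra_simps)
  have "integrable lborel (\<lambda>x. C * deriv \<phi> x)"
    by (intro integrable_mult_test_fun continuous_imp_loc_int continuous_const test_fun_deriv phi)
  then have "(LINT x|lborel. primitive c g x * deriv \<phi> x)
      = (LINT x|lborel. indicator {-M..M} x * (LBINT t=-M..x. g t) * deriv \<phi> x)
      + (LINT x|lborel. C * deriv \<phi> x)"
    unfolding pointwise by (rule Bochner_Integration.integral_add[OF Fubini(2)])
  also have "(LINT x|lborel. C * deriv \<phi> x) = 0"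
    using integral_deriv_test_fun[OF phi] by simp
  also have "indicator {-M..M} t * g t * (LBINT x=t..M. deriv \<phi> x) = - (g t * \<phi> t)" for t
    using interval_integral_deriv_smooth[OF sm, of t M] outside(1)[of t] R
    by (cases "t \<in> {-M..M}") (auto simp: M_def)
  then have "(LINT x|lborel. indicator {-M..M} x * (LBINT t=-M..x. g t) * deriv \<phi> x)
      = - (LINT x|lborel. g x * \<phi> x)"
    by (simp add: Fubini(1))
  finally show ?thesis by simp
qed

text \<open>The heart of the du Bois-Reymond lemma: the combination \<open>g\<close> of two cutoffs below has
  integral zero, so it is the derivative of a test function.\<close>
lemma integral_mult_cutoff_antisym:
  assumes h: "loc_int h" and orth: "\<And>\<phi>. test_fun \<phi> \<Longrightarrow> (LINT x|lborel. h x * deriv \<phi> x) = 0"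
    and "a \<le> b" "c \<le> d" "1 \<le> n"
  shows "(LINT x|lborel. cutoff n c d x) * (LINT x|lborel. h x * cutoff n a b x)
       = (LINT x|lborel. cutoff n a b x) * (LINT x|lborel. h x * cutoff n c d x)"
proof -
  have one: "loc_int (\<lambda>_. 1)" by (intro continuous_imp_loc_int continuous_const)
  define g where "g x = (LINT x|lborel. cutoff n c d x) * cutoff n a b x
                      - (LINT x|lborel. cutoff n a b x) * cutoff n c d x" for x
  have smooth: "smooth g"
    unfolding g_def by (intro smooth_diff smooth_cmult smooth_cutoff)
  have supp: "g x = 0" if "x \<notin> {min a c - 1..max b d + 1}" for x
  proof -
    have "x \<notin> {a - 1..b + 1}" "x \<notin> {c - 1..d + 1}" using that by auto
    then show ?thesis
      using cutoff_eq_0[OF \<open>a \<le> b\<close> \<open>1 \<le> n\<close>] cutoff_eq_0[OF \<open>c \<le> d\<close> \<open>1 \<le> n\<close>]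
      by (simp add: g_def)
  qed
  have zero: "(LINT x|lborel. g x) = 0"
    unfolding g_def using integrable_mult_cutoff[OF one, of a b n] integrable_mult_cutoff[OF one, of c d n] assms
    by simp
  define \<phi> where "\<phi> x = (LBINT t=min a c - 1..x. g t)" for x
  have "test_fun \<phi>" "deriv \<phi> = g"
    unfolding \<phi>_def[abs_def] using test_fun_primitive[of g "min a c - 1" "max b d + 1"] smooth supp zero
    by blast+
  then have "(LINT x|lborel. h x * g x) = 0"
    using orth by metis
  moreover have "(LINT x|lborel. h x * g x)
      = (LINT x|lborel. cutoff n c d x) * (LINT x|lborel. h x * cutoff n a b x)
      - (LINT x|lborel. cutoff n a b x) * (LINT x|lborel. h x * cutoff n c d x)"
    unfolding g_def right_diff_distrib mult.left_commute[of "h _"]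
    using integrable_mult_cutoff[OF h, of a b n] integrable_mult_cutoff[OF h, of c d n] assms
    by simp
  ultimately show ?thesis by simp
qed

lemma interval_integral_eq_if_orthogonal_to_derivs:
  fixes a b :: real and h :: "real \<Rightarrow> real"
  assumes h: "loc_int h" and orth: "\<And>\<phi>. test_fun \<phi> \<Longrightarrow> (LINT x|lborel. h x * deriv \<phi> x) = 0"
    and "a \<le> b"
  shows "(LBINT t=a..b. h t) = (b - a) * (LBINT t=0..1. h t)"
proof -
  let ?J = "\<lambda>a b m. LINT x|lborel. cutoff (real (Suc m)) a b x"
  let ?I = "\<lambda>a b m. LINT x|lborel. h x * cutoff (real (Suc m)) a b x"
  have J: "?J a b \<longlonglongrightarrow> b - a" if "a \<le> b" for a b :: real
    using tendsto_integral_cutoff[OF continuous_imp_loc_int[OF continuous_const] that, of 1] that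
    by simp
  have "?J 0 1 m * ?I a b m = ?J a b m * ?I 0 1 m" for m
    by (rule integral_mult_cutoff_antisym[OF h orth \<open>a \<le> b\<close>]) simp_all
  moreover have "(\<lambda>m. ?J 0 1 m * ?I a b m) \<longlonglongrightarrow> (1 - 0) * (LBINT t=a..b. h t)"
    by (intro tendsto_mult J tendsto_integral_cutoff h \<open>a \<le> b\<close>) simp
  ultimately have "(\<lambda>m. ?J a b m * ?I 0 1 m) \<longlonglongrightarrow> (LBINT t=a..b. h t)"
    by simp
  moreover have "(\<lambda>m. ?J a b m * ?I 0 1 m) \<longlonglongrightarrow> (b - a) * (LBINT t=0..1. h t)"
    using tendsto_mult[OF J[OF \<open>a \<le> b\<close>] tendsto_integral_cutoff[OF h, of 0 1]]
    by (simp add: zero_ereal_def one_ereal_def)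
  ultimately show ?thesis by (rule LIMSEQ_unique)
qed

lemma AE_eq_const_if_orthogonal_to_derivs:
  fixes h :: "real \<Rightarrow> real"
  assumes h: "loc_int h" and orth: "\<And>\<phi>. test_fun \<phi> \<Longrightarrow> (LINT x|lborel. h x * deriv \<phi> x) = 0"
  shows "AE x in lborel. h x = (LBINT t=0..1. h t)"
proof -
  define c where "c = (LBINT t=0..1. h t)"
  have const: "loc_int (\<lambda>_. c)" by (intro continuous_imp_loc_int continuous_const)
  have "AE x in lborel. h x - c = 0"
  proof (rule loc_int_AE_zero_if_interval_integrals_zero[OF loc_int_diff[OF h const]])
    fix a b :: real assume "a \<le> b"
    have "(LBINT t=a..b. h t - c) = (LBINT t=a..b. h t) - (LBINT t=a..b. c)"
      using loc_int_interval_integrable[OF h] loc_int_interval_integrable[OF const] by simp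
    then show "(LBINT t=a..b. h t - c) = 0"
      using interval_integral_eq_if_orthogonal_to_derivs[OF h orth \<open>a \<le> b\<close>] \<open>a \<le> b\<close>
      by (simp add: c_def)
  qed
  then show ?thesis by (simp add: c_def)
qed

lemma AE_eq_primitive_if_weak_derivative:
  assumes f: "loc_int f" and g: "loc_int g"
    and weak: "\<And>\<phi>. test_fun \<phi> \<Longrightarrow> (LINT x|lborel. f x * deriv \<phi> x) = - (LINT x|lborel. g x * \<phi> x)"
  shows "\<exists>c. AE x in lborel. f x = primitive c g x"
proof -
  have G: "loc_int (primitive 0 g)" by (intro continuous_imp_loc_int isCont_primitive g)
  have "AE x in lborel. f x - primitive 0 g x = (LBINT t=0..1. f t - primitive 0 g t)"
  proof (rule AE_eq_const_if_orthogonal_to_derivs[OF loc_int_diff[OF f G]])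
    fix \<phi> :: "real \<Rightarrow> real" assume \<phi>: "test_fun \<phi>"
    have "(LINT x|lborel. (f x - primitive 0 g x) * deriv \<phi> x)
        = (LINT x|lborel. f x * deriv \<phi> x) - (LINT x|lborel. primitive 0 g x * deriv \<phi> x)"
      using integrable_mult_test_fun[OF f test_fun_deriv[OF \<phi>]]
            integrable_mult_test_fun[OF G test_fun_deriv[OF \<phi>]]
      by (simp add: left_diff_distrib)
    then show "(LINT x|lborel. (f x - primitive 0 g x) * deriv \<phi> x) = 0"
      using weak[OF \<phi>] integral_primitive_times_deriv[OF g \<phi>] by simp
  qed
  then have "AE x in lborel. f x = primitive (LBINT t=0..1. f t - primitive 0 g t) g x"
    by eventually_elim (simp add: primitive_def)
  then show ?thesis by blast
qed

lemma weak_deriv_imp_AE_eq_primitive: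
  "weak_deriv f g \<Longrightarrow> \<exists>c. AE x in lborel. f x = primitive c g x"
  unfolding weak_deriv_def by (blast intro: AE_eq_primitive_if_weak_derivative)

lemma continuous_AE_eq_imp_eq:
  fixes f g :: "real \<Rightarrow> real"
  assumes "\<And>x. isCont f x" "\<And>x. isCont g x" "AE x in lborel. f x = g x"
  shows "f x = g x"
proof -
  have "closed {x. f x = g x}"
    using assms(1,2) by (intro closed_Collect_eq continuous_at_imp_continuous_on) auto
  moreover have "AE x in lebesgue. x \<in> {x. f x = g x}"
    using AE_completion[OF assms(3)] by simp
  ultimately show ?thesis using mem_closed_if_AE_lebesgue by blast
qed

lemma weak_deriv_unique:
  assumes "weak_deriv f g" "weak_deriv f h"
  shows "AE x in lborel. g x = h x"
proof -
  have g: "loc_int g" and h: "loc_int h" using assms by (auto simp: weak_deriv_def)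
  obtain c d where "AE x in lborel. f x = primitive c g x" "AE x in lborel. f x = primitive d h x"
    using weak_deriv_imp_AE_eq_primitive assms by metis
  then have "AE x in lborel. primitive c g x = primitive d h x" by eventually_elim simp
  then have eq: "primitive c g x = primitive d h x" for x
    by (rule continuous_AE_eq_imp_eq[OF isCont_primitive[OF g] isCont_primitive[OF h]])
  have "AE x in lborel. g x - h x = 0"
  proof (rule loc_int_AE_zero_if_interval_integrals_zero[OF loc_int_diff[OF g h]])
    fix a b :: real
    have "(LBINT t=a..b. g t - h t) = (LBINT t=a..b. g t) - (LBINT t=a..b. h t)"
      using loc_int_interval_integrable[OF g] loc_int_interval_integrable[OF h] by simp
    also have "\<dots> = 0"
      using primitive_diff[OF g, of c b a] primitive_diff[OF h, of d b a] eq[of a] eq[of b] by simp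
    finally show "(LBINT t=a..b. g t - h t) = 0" .
  qed
  then show ?thesis by simp
qed

section \<open>Square integrable functions\<close>

lemma abs_le_1_plus_power2: "\<bar>t\<bar> \<le> 1 + (t::real)\<^sup>2"
proof -
  have "0 \<le> (\<bar>t\<bar> - 1)\<^sup>2" by simp
  then show ?thesis by (simp add: power2_eq_square algebra_simps)
qed

lemma abs_mult_le_sum_power2: "\<bar>a * b\<bar> \<le> a\<^sup>2 + (b::real)\<^sup>2"
proof -
  have "2 * (\<bar>a\<bar> * \<bar>b\<bar>) \<le> a\<^sup>2 + b\<^sup>2"
    using sum_squares_bound[of "\<bar>a\<bar>" "\<bar>b\<bar>"] by (simp add: mult.assoc)
  moreover have "0 \<le> \<bar>a\<bar> * \<bar>b\<bar>" by simp
  ultimately show ?thesis unfolding abs_mult by linarith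
qed

lemma integrable_if_abs_le:
  fixes f g :: "real \<Rightarrow> real"
  assumes "integrable lborel g" "f \<in> borel_measurable borel" "\<And>x. \<bar>f x\<bar> \<le> g x"
  shows "integrable lborel f"
  using assms by (intro Bochner_Integration.integrable_bound[OF assms(1)] AE_I2)
    (auto intro: order_trans[OF _ abs_ge_self])

lemma integrable_bounded_mult:
  fixes f g :: "real \<Rightarrow> real"
  assumes "integrable lborel g" "f \<in> borel_measurable borel" "\<And>x. \<bar>f x\<bar> \<le> K"
  shows "integrable lborel (\<lambda>x. f x * g x)"
proof (rule integrable_if_abs_le[where g="\<lambda>x. K * \<bar>g x\<bar>"])
  show "\<bar>f x * g x\<bar> \<le> K * \<bar>g x\<bar>" for x
    using assms(3) by (simp add: abs_mult mult_right_mono)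
qed (use assms(1,2) in auto)

lemma integrable_mult_if_square_integrable:
  fixes f g :: "real \<Rightarrow> real"
  assumes "integrable lborel (\<lambda>x. (f x)\<^sup>2)" "integrable lborel (\<lambda>x. (g x)\<^sup>2)"
    "f \<in> borel_measurable borel" "g \<in> borel_measurable borel"
  shows "integrable lborel (\<lambda>x. f x * g x)"
  by (rule integrable_if_abs_le[where g="\<lambda>x. (f x)\<^sup>2 + (g x)\<^sup>2"])
     (use assms abs_mult_le_sum_power2 in auto)

lemma L2_cong_AE:
  assumes "L2 f" "g \<in> borel_measurable borel" "AE x in lborel. f x = g x"
  shows "L2 g"
proof -
  have [measurable]: "f \<in> borel_measurable borel" using assms(1) by (simp add: L2_def)
  have "integrable lborel (\<lambda>x. (f x)\<^sup>2) \<longleftrightarrow> integrable lborel (\<lambda>x. (g x)\<^sup>2)"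
    by (rule integrable_cong_AE) (use assms(2,3) in \<open>auto elim: AE_mp\<close>)
  then show ?thesis using assms(1,2) by (simp add: L2_def)
qed

lemma L2_integrable_indicator_plus_power2:
  "L2 g \<Longrightarrow> integrable lborel (\<lambda>t. indicator {a..b} t + (g t)\<^sup>2)"
  unfolding L2_def
  by (intro Bochner_Integration.integrable_add integrable_real_indicator) (simp_all add: emeasure_lborel_Icc_eq)

lemma L2_integrable_indicator_mult:
  assumes "L2 g"
  shows "integrable lborel (\<lambda>t. indicator {a..b} t * g t)"
proof (rule Bochner_Integration.integrable_bound[OF L2_integrable_indicator_plus_power2[OF assms]])
  show "(\<lambda>t. indicator {a..b} t * g t) \<in> borel_measurable lborel"
    using assms unfolding L2_def by (intro borel_measurable_times borel_measurable_indicator) auto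
  show "AE t in lborel. norm (indicator {a..b} t * g t) \<le> norm (indicator {a..b} t + (g t)\<^sup>2)"
    using abs_le_1_plus_power2 by (auto simp: indicator_def)
qed

lemma L2_imp_loc_int: "L2 g \<Longrightarrow> loc_int g"
  using L2_integrable_indicator_mult by (simp add: loc_int_def set_integrable_def)

lemma abs_interval_integral_le_L2:
  fixes x y :: real
  assumes g: "L2 g" and "x \<le> y"
  shows "\<bar>LBINT t=x..y. g t\<bar> \<le> (y - x) + (LINT t|lborel. (g t)\<^sup>2)"
proof -
  have "\<bar>LBINT t=x..y. g t\<bar> = \<bar>LINT t|lborel. indicator {x..y} t * g t\<bar>"
    using \<open>x \<le> y\<close> by (simp add: interval_integral_Icc set_lebesgue_integral_def)
  also have "\<dots> \<le> (LINT t|lborel. indicator {x..y} t + (g t)\<^sup>2)"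
    using abs_le_1_plus_power2
    by (intro integral_abs_bound_integral L2_integrable_indicator_mult L2_integrable_indicator_plus_power2 g)
       (auto simp: indicator_def)
  also have "\<dots> = (y - x) + (LINT t|lborel. (g t)\<^sup>2)"
    using g \<open>x \<le> y\<close> by (subst Bochner_Integration.integral_add) (auto simp: L2_def)
  finally show ?thesis .
qed

lemma ex_power2_le_integral_power2:
  fixes f :: "real \<Rightarrow> real"
  assumes cont: "\<And>x. isCont f x" and f2: "integrable lborel (\<lambda>x. (f x)\<^sup>2)"
  obtains y where "y \<in> {x..x + 1}" "(f y)\<^sup>2 \<le> (LINT t|lborel. (f t)\<^sup>2)"
proof -
  have "continuous_on {x..x + 1} (\<lambda>t. (f t)\<^sup>2)"
    by (intro continuous_intros continuous_at_imp_continuous_on ballI cont)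
  then obtain y where y: "y \<in> {x..x + 1}" and min: "\<And>t. t \<in> {x..x + 1} \<Longrightarrow> (f y)\<^sup>2 \<le> (f t)\<^sup>2"
    using continuous_attains_inf[of "{x..x + 1}" "\<lambda>t. (f t)\<^sup>2"] by auto
  have "(f y)\<^sup>2 = (LINT t|lborel. indicator {x..x + 1} t * (f y)\<^sup>2)" by simp
  also have "\<dots> \<le> (LINT t|lborel. (f t)\<^sup>2)"
    using min f2 continuous_imp_borel_measurable[OF cont]
    by (intro integral_mono integrable_mult_left integrable_real_indicator)
       (auto simp: indicator_def emeasure_lborel_Icc_eq)
  finally show thesis by (rule that[OF y])
qed

lemma primitive_bounded_if_L2:
  assumes g: "L2 g" and F2: "integrable lborel (\<lambda>x. (primitive c g x)\<^sup>2)"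
  obtains K where "\<And>x. \<bar>primitive c g x\<bar> \<le> K"
proof
  fix x
  obtain y where y: "y \<in> {x..x + 1}" and Fy: "(primitive c g y)\<^sup>2 \<le> (LINT t|lborel. (primitive c g t)\<^sup>2)"
    using ex_power2_le_integral_power2[OF isCont_primitive[OF L2_imp_loc_int[OF g]] F2] by blast
  have "\<bar>primitive c g y - primitive c g x\<bar> \<le> 1 + (LINT t|lborel. (g t)\<^sup>2)"
    using primitive_diff[OF L2_imp_loc_int[OF g], of c y x] abs_interval_integral_le_L2[OF g, of x y] y
    by simp
  moreover have "\<bar>primitive c g y\<bar> \<le> 1 + (LINT t|lborel. (primitive c g t)\<^sup>2)"
    using abs_le_1_plus_power2[of "primitive c g y"] Fy by linarith
  ultimately show "\<bar>primitive c g x\<bar> \<le> 2 + (LINT t|lborel. (primitive c g t)\<^sup>2) + (LINT t|lborel. (g t)\<^sup>2)"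
    by linarith
qed

section \<open>Continuous representatives\<close>

lemma in_H2_borel_measurable: "in_H2 r \<Longrightarrow> r \<in> borel_measurable borel"
  by (simp add: in_H2_def L2_def)

lemma H2_classical_representative:
  assumes "in_H2 r" "weak_deriv r r'"
  obtains R R' K K' where "\<And>x. (R has_real_derivative R' x) (at x)" "\<And>x. isCont R' x"
    "AE x in lborel. r x = R x" "AE x in lborel. r' x = R' x" "\<And>x. \<bar>R x\<bar> \<le> K" "\<And>x. \<bar>R' x\<bar> \<le> K'"
proof -
  obtain g g' where r: "L2 r" and g: "weak_deriv r g" "L2 g" and g': "weak_deriv g g'" "L2 g'"
    using assms(1) by (auto simp: in_H2_def in_H1_def)
  obtain c' where c': "AE x in lborel. g x = primitive c' g' x"
    using weak_deriv_imp_AE_eq_primitive[OF g'(1)] by blast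
  define R' where "R' = primitive c' g'"
  have R'_cont: "isCont R' x" for x
    unfolding R'_def by (rule isCont_primitive[OF L2_imp_loc_int[OF g'(2)]])
  have [measurable]: "r \<in> borel_measurable borel" "r' \<in> borel_measurable borel" "R' \<in> borel_measurable borel"
    using assms(2) R'_cont by (auto simp: weak_deriv_def intro: loc_int_imp_borel_measurable continuous_imp_borel_measurable)
  have r'_R': "AE x in lborel. r' x = R' x"
    using weak_deriv_unique[OF assms(2) g(1)] c' unfolding R'_def by eventually_elim simp
  have L2_R': "L2 R'" by (rule L2_cong_AE[OF g(2)]) (use c' in \<open>simp_all flip: R'_def\<close>)
  obtain c where c: "AE x in lborel. r x = primitive c r' x"
    using weak_deriv_imp_AE_eq_primitive[OF assms(2)] by blast
  define R where "R = primitive c R'"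
  have R_eq: "primitive c r' = R" unfolding R_def by (rule primitive_cong_AE[OF _ _ r'_R']) simp_all
  have R_deriv: "(R has_real_derivative R' x) (at x)" for x
    unfolding R_def by (rule has_real_derivative_primitive[OF R'_cont])
  have r_R: "AE x in lborel. r x = R x" using c by (simp add: R_eq)
  have L2_R: "L2 R"
    by (rule L2_cong_AE[OF r _ r_R]) (intro continuous_imp_borel_measurable DERIV_isCont[OF R_deriv])
  obtain K where "\<And>x. \<bar>R x\<bar> \<le> K"
    using primitive_bounded_if_L2[OF L2_R', of c] L2_R unfolding R_def L2_def by blast
  moreover obtain K' where "\<And>x. \<bar>R' x\<bar> \<le> K'"
    using primitive_bounded_if_L2[OF g'(2)] L2_R' unfolding R'_def L2_def by blast
  ultimately show thesis using that R_deriv R'_cont r_R r'_R' by blast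
qed

lemma solves_eq_weak_derivative:
  fixes H \<mu> :: real
  assumes u: "weak_deriv u u'" and sol: "solves_eq H \<mu> r u" and r: "r \<in> borel_measurable borel"
    and Q: "\<And>x. isCont Q x" "AE x in lborel. H\<^sup>2 * x\<^sup>2 * u x - (u x) ^ 3 - r x * u x + \<mu> * u x = Q x"
    and \<phi>: "test_fun \<phi>"
  shows "(LINT x|lborel. u' x * deriv \<phi> x) = - (LINT x|lborel. Q x * \<phi> x)"
proof -
  have [measurable]: "u \<in> borel_measurable borel" "\<phi> \<in> borel_measurable borel" "Q \<in> borel_measurable borel"
    using u test_funE[OF \<phi>] Q(1)
    by (metis weak_deriv_def loc_int_imp_borel_measurable continuous_imp_borel_measurable)+
  have "(LINT x|lborel. u' x * deriv \<phi> x) = - (LINT x|lborel. u x * deriv (deriv \<phi>) x)"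
    using u test_fun_deriv[OF \<phi>] by (simp add: weak_deriv_def)
  also have "(LINT x|lborel. u x * deriv (deriv \<phi>) x)
      = (LINT x|lborel. (H\<^sup>2 * x\<^sup>2 * u x - (u x) ^ 3 - r x * u x + \<mu> * u x) * \<phi> x)"
    using sol \<phi> by (simp add: solves_eq_def)
  also have "\<dots> = (LINT x|lborel. Q x * \<phi> x)"
    by (rule integral_cong_AE) (use r Q(2) in \<open>auto elim: AE_mp\<close>)
  finally show ?thesis by simp
qed

lemma in_H1_weak_deriv_L2:
  assumes "in_H1 u" "weak_deriv u u'"
  shows "L2 u'"
proof -
  obtain g where g: "weak_deriv u g" "L2 g" using assms(1) by (auto simp: in_H1_def)
  show ?thesis
  proof (rule L2_cong_AE[OF g(2)])
    show "u' \<in> borel_measurable borel"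
      using assms(2) by (simp add: weak_deriv_def loc_int_imp_borel_measurable)
  qed (rule weak_deriv_unique[OF g(1) assms(2)])
qed

lemma solution_C1_derivative:
  fixes H \<mu> :: real
  assumes u: "weak_deriv u u'" and sol: "solves_eq H \<mu> r u"
    and r: "r \<in> borel_measurable borel" and R: "AE x in lborel. r x = R x" "\<And>x. isCont R x"
  obtains c V where "AE x in lborel. u x = primitive c V x" "AE x in lborel. u' x = V x"
    "\<And>x. (V has_real_derivative H\<^sup>2 * x\<^sup>2 * primitive c V x - (primitive c V x) ^ 3
        - R x * primitive c V x + \<mu> * primitive c V x) (at x)"
proof -
  have loc_u': "loc_int u'" using u by (simp add: weak_deriv_def)
  obtain c where c: "AE x in lborel. u x = primitive c u' x"
    using weak_deriv_imp_AE_eq_primitive[OF u] by blast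
  define Q where "Q x = H\<^sup>2 * x\<^sup>2 * primitive c u' x - (primitive c u' x) ^ 3
    - R x * primitive c u' x + \<mu> * primitive c u' x" for x
  have Q_cont: "isCont Q x" for x
    unfolding Q_def using isCont_primitive[OF loc_u'] R(2) by (intro continuous_intros)
  have "AE x in lborel. (H\<^sup>2 * x\<^sup>2 * u x - (u x) ^ 3 - r x * u x + \<mu> * u x) = Q x"
    using c R(1) by eventually_elim (simp add: Q_def)
  then have "\<exists>d. AE x in lborel. u' x = primitive d Q x"
    by (intro AE_eq_primitive_if_weak_derivative[OF loc_u' continuous_imp_loc_int[OF Q_cont]]
              solves_eq_weak_derivative[OF u sol r Q_cont])
  then obtain d where d: "AE x in lborel. u' x = primitive d Q x" by blast
  define V where "V = primitive d Q"
  have V_deriv: "(V has_real_derivative Q x) (at x)" for x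
    unfolding V_def by (rule has_real_derivative_primitive[OF Q_cont])
  have [measurable]: "u' \<in> borel_measurable borel" "V \<in> borel_measurable borel"
    using loc_int_imp_borel_measurable[OF loc_u'] DERIV_isCont[OF V_deriv]
    by (auto intro: continuous_imp_borel_measurable)
  have u'_V: "AE x in lborel. u' x = V x" using d by (simp add: V_def)
  have "primitive c u' = primitive c V" by (rule primitive_cong_AE[OF _ _ u'_V]) simp_all
  then show thesis using that[of c V] c u'_V V_deriv by (simp add: Q_def)
qed

lemma solution_classical_representative:
  fixes H \<mu> :: real
  assumes u: "in_XA u" "weak_deriv u u'" and sol: "solves_eq H \<mu> r u"
    and r: "r \<in> borel_measurable borel" and R: "AE x in lborel. r x = R x" "\<And>x. isCont R x"
  obtains U V K where "\<And>x. (U has_real_derivative V x) (at x)"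
    "\<And>x. (V has_real_derivative H\<^sup>2 * x\<^sup>2 * U x - (U x) ^ 3 - R x * U x + \<mu> * U x) (at x)"
    "AE x in lborel. u x = U x" "AE x in lborel. u' x = V x"
    "L2 U" "L2 (\<lambda>x. x * U x)" "L2 V" "\<And>x. \<bar>U x\<bar> \<le> K"
proof -
  obtain c V where u_U: "AE x in lborel. u x = primitive c V x" and u'_V: "AE x in lborel. u' x = V x"
    and V_deriv: "\<And>x. (V has_real_derivative H\<^sup>2 * x\<^sup>2 * primitive c V x - (primitive c V x) ^ 3
        - R x * primitive c V x + \<mu> * primitive c V x) (at x)"
    using solution_C1_derivative[OF u(2) sol r R] by blast
  have U_deriv: "(primitive c V has_real_derivative V x) (at x)" for x
    by (rule has_real_derivative_primitive[OF DERIV_isCont[OF V_deriv]])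
  have [measurable]: "V \<in> borel_measurable borel" "primitive c V \<in> borel_measurable borel"
    using DERIV_isCont[OF V_deriv] DERIV_isCont[OF U_deriv] by (auto intro: continuous_imp_borel_measurable)
  have H1: "in_H1 u" and L2_u: "L2 u" and L2_xu: "L2 (\<lambda>x. x * u x)"
    using u(1) by (simp_all add: in_XA_def in_H1_def)
  have L2_U: "L2 (primitive c V)" by (rule L2_cong_AE[OF L2_u _ u_U]) simp
  have "AE x in lborel. x * u x = x * primitive c V x" using u_U by eventually_elim simp
  then have L2_xU: "L2 (\<lambda>x. x * primitive c V x)" by (rule L2_cong_AE[OF L2_xu, rotated]) simp
  have L2_V: "L2 V" by (rule L2_cong_AE[OF in_H1_weak_deriv_L2[OF H1 u(2)] _ u'_V]) simp
  obtain K where "\<And>x. \<bar>primitive c V x\<bar> \<le> K"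
    using primitive_bounded_if_L2[OF L2_V, of c] L2_U unfolding L2_def by blast
  then show thesis by (rule that[OF U_deriv V_deriv u_U u'_V L2_U L2_xU L2_V])
qed

section \<open>The Pohozaev identity\<close>

lemma integrable_nonneg_ex_times_less:
  fixes w :: "real \<Rightarrow> real"
  assumes w: "integrable lborel w" "\<And>t. 0 \<le> w t" and "1 \<le> N" "0 < e"
  shows "\<exists>R\<ge>N. R * w R < e"
proof (rule ccontr)
  assume "\<not> (\<exists>R\<ge>N. R * w R < e)"
  then have lower: "e / t \<le> w t" if "N \<le> t" for t
    using that \<open>1 \<le> N\<close> by (auto simp: field_simps not_less)
  define A where "A = (LINT t|lborel. w t)"
  define M where "M = N * exp ((A + 1) / e)"
  have "0 \<le> A" unfolding A_def using w by simp
  then have "N \<le> M" using \<open>1 \<le> N\<close> \<open>0 < e\<close> by (simp add: M_def)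
  text \<open>Since \<open>w \<ge> e/t\<close> beyond \<open>N\<close>, the integral of \<open>w\<close> over \<open>[N, M]\<close> exceeds \<open>e ln (M/N) = A + 1\<close>.\<close>
  have "A + 1 = e * ln M - e * ln N"
    using \<open>1 \<le> N\<close> \<open>0 < e\<close> by (simp add: M_def ln_mult field_simps)
  also have "\<dots> = (LBINT t=N..M. e / t)"
  proof (rule interval_integral_FTC_finite[symmetric])
    show "continuous_on {min N M..max N M} (\<lambda>t. e / t)"
      using \<open>1 \<le> N\<close> \<open>N \<le> M\<close> by (intro continuous_intros) auto
    fix t assume "min N M \<le> t" "t \<le> max N M"
    then show "((\<lambda>t. e * ln t) has_vector_derivative e / t) (at t within {min N M..max N M})"
      using \<open>1 \<le> N\<close> \<open>N \<le> M\<close>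
      by (auto intro!: derivative_eq_intros simp: has_real_derivative_iff_has_vector_derivative[symmetric] field_simps)
  qed
  also have "\<dots> = (LINT t:{N..M}|lborel. e / t)"
    using \<open>N \<le> M\<close> by (simp add: interval_integral_Icc)
  also have "\<dots> \<le> (LINT t:{N..M}|lborel. w t)"
  proof (rule set_integral_mono)
    show "set_integrable lborel {N..M} (\<lambda>t. e / t)"
      unfolding set_integrable_def using \<open>1 \<le> N\<close>
      by (intro borel_integrable_compact[unfolded real_scaleR_def]) (auto intro!: continuous_intros)
    show "set_integrable lborel {N..M} w"
      unfolding set_integrable_def using integrable_mult_indicator[OF _ w(1)] by simp
  qed (use lower in auto)
  also have "\<dots> \<le> A"
    unfolding A_def set_lebesgue_integral_def using w
    by (intro integral_mono integrable_mult_indicator) (auto simp: indicator_def)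
  finally show False by simp
qed

lemma tendsto_integral_symmetric_intervals:
  fixes g :: "real \<Rightarrow> real"
  assumes g: "integrable lborel g" and R: "\<And>n. real n \<le> R n"
  shows "(\<lambda>n. LINT x|lborel. indicator {- R n..R n} x * g x) \<longlonglongrightarrow> (LINT x|lborel. g x)"
proof (rule integral_dominated_convergence[where w="\<lambda>x. \<bar>g x\<bar>"])
  show "AE x in lborel. (\<lambda>n. indicator {- R n..R n} x * g x) \<longlonglongrightarrow> g x"
  proof (intro AE_I2 tendsto_eventually)
    fix x :: real
    obtain N :: nat where "\<bar>x\<bar> \<le> real N" using real_arch_simple by blast
    then have "\<bar>x\<bar> \<le> R n" if "N \<le> n" for n
      using that R[of n] by (meson of_nat_le_iff order_trans)
    then show "\<forall>\<^sub>F n in sequentially. indicator {- R n..R n} x * g x = g x"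
      unfolding eventually_sequentially by (intro exI[of _ N]) (force simp: indicator_def abs_le_iff)
  qed
qed (use g in \<open>auto simp: indicator_def\<close>)

lemma integral_eq_0_if_primitive_decays:
  fixes F G W :: "real \<Rightarrow> real"
  assumes F: "\<And>x. (F has_real_derivative G x) (at x)" and G: "\<And>x. isCont G x" "integrable lborel G"
    and W: "integrable lborel W" "\<And>x. 0 \<le> W x" and decay: "\<And>x. 1 \<le> \<bar>x\<bar> \<Longrightarrow> \<bar>F x\<bar> \<le> \<bar>x\<bar> * W x"
  shows "(LINT x|lborel. G x) = 0"
proof -
  define W2 where "W2 x = W x + W (-x)" for x
  have "integrable lborel (\<lambda>x. W (0 + (-1) * x))"
    using W(1) lborel_integrable_real_affine_iff[of "-1" W 0] by simp
  then have "integrable lborel W2" unfolding W2_def using W(1) by simp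
  moreover have "0 \<le> W2 x" for x unfolding W2_def using W(2) by (simp add: add_nonneg_nonneg)
  ultimately have "\<exists>R\<ge>real n + 1. R * W2 R < 1 / (real n + 1)" for n
    by (intro integrable_nonneg_ex_times_less) auto
  then obtain R where R: "\<And>n. real n + 1 \<le> R n" "\<And>n. R n * W2 (R n) < 1 / (real n + 1)"
    by metis
  have FTC: "(LINT x|lborel. indicator {- R n..R n} x * G x) = F (R n) - F (- R n)" for n
  proof -
    have "(LINT x|lborel. indicator {- R n..R n} x * G x) = (LBINT x=- R n..R n. G x)"
      using R(1)[of n] by (simp add: interval_integral_Icc set_lebesgue_integral_def)
    also have "\<dots> = F (R n) - F (- R n)"
    proof (rule interval_integral_FTC_finite)
      show "continuous_on {min (- R n) (R n)..max (- R n) (R n)} G"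
        by (intro continuous_at_imp_continuous_on ballI G)
      show "(F has_vector_derivative G x) (at x within {min (- R n) (R n)..max (- R n) (R n)})" for x
        using F[of x] by (simp add: has_real_derivative_iff_has_vector_derivative[symmetric] has_field_derivative_at_within)
    qed
    finally show ?thesis .
  qed
  have "\<bar>F (R n) - F (- R n)\<bar> \<le> 1 / (real n + 1)" for n
  proof -
    have "\<bar>F (R n) - F (- R n)\<bar> \<le> R n * W (R n) + R n * W (- R n)"
      using decay[of "R n"] decay[of "- R n"] R(1)[of n] by simp
    also have "\<dots> = R n * W2 (R n)" by (simp add: W2_def algebra_simps)
    finally show ?thesis using R(2)[of n] by simp
  qed
  then have "(\<lambda>n. F (R n) - F (- R n)) \<longlonglongrightarrow> 0"
    by (intro Lim_null_comparison[OF _ LIMSEQ_inverse_real_of_nat_add[of 0, unfolded inverse_eq_divide]])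
       (simp add: add.commute)
  moreover have "(\<lambda>n. F (R n) - F (- R n)) \<longlonglongrightarrow> (LINT x|lborel. G x)"
  proof -
    have "real n \<le> R n" for n using R(1)[of n] by simp
    then show ?thesis using tendsto_integral_symmetric_intervals[OF G(2), of R] by (simp add: FTC)
  qed
  ultimately show ?thesis using LIMSEQ_unique by metis
qed

lemma pohozaev_flux_has_derivative:
  fixes U V \<rho> \<rho>' :: "real \<Rightarrow> real" and H \<mu> :: real
  assumes U: "(U has_real_derivative V x) (at x)"
    and V: "(V has_real_derivative H\<^sup>2 * x\<^sup>2 * U x - (U x) ^ 3 - \<rho> x * U x + \<mu> * U x) (at x)"
    and \<rho>: "(\<rho> has_real_derivative \<rho>' x) (at x)"
  shows "((\<lambda>x. x * (V x)\<^sup>2 - H\<^sup>2 * x ^ 3 * (U x)\<^sup>2 + x * (U x) ^ 4 / 2 + x * \<rho> x * (U x)\<^sup>2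
              - \<mu> * x * (U x)\<^sup>2 + U x * V x)
         has_real_derivative 2 * (V x)\<^sup>2 - 2 * H\<^sup>2 * (x * U x)\<^sup>2 - 1/2 * (U x) ^ 4 + (U x)\<^sup>2 * x * \<rho>' x) (at x)"
  by (rule derivative_eq_intros refl U V \<rho> | simp)+
     (simp add: power2_eq_square power3_eq_cube eval_nat_numeral algebra_simps)

lemma pohozaev_flux_abs_le:
  fixes x u v r H \<mu> :: real
  assumes "1 \<le> \<bar>x\<bar>"
  shows "\<bar>x * v\<^sup>2 - H\<^sup>2 * x ^ 3 * u\<^sup>2 + x * u ^ 4 / 2 + x * r * u\<^sup>2 - \<mu> * x * u\<^sup>2 + u * v\<bar>
    \<le> \<bar>x\<bar> * (2 * v\<^sup>2 + H\<^sup>2 * (x * u)\<^sup>2 + u ^ 4 + \<bar>r\<bar> * u\<^sup>2 + (\<bar>\<mu>\<bar> + 1) * u\<^sup>2)"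
proof -
  have "\<bar>u * v\<bar> \<le> \<bar>x\<bar> * (u\<^sup>2 + v\<^sup>2)"
    using abs_mult_le_sum_power2[of u v] mult_right_mono[OF assms, of "u\<^sup>2 + v\<^sup>2"] by simp
  moreover have "\<bar>H\<^sup>2 * x ^ 3 * u\<^sup>2\<bar> = \<bar>x\<bar> * (H\<^sup>2 * (x * u)\<^sup>2)"
    by (simp add: abs_mult power2_eq_square power3_eq_cube mult_ac)
  moreover have "\<bar>x * u ^ 4 / 2\<bar> \<le> \<bar>x\<bar> * u ^ 4" by (simp add: abs_mult)
  moreover have "\<bar>x * v\<^sup>2\<bar> = \<bar>x\<bar> * v\<^sup>2" "\<bar>x * r * u\<^sup>2\<bar> = \<bar>x\<bar> * (\<bar>r\<bar> * u\<^sup>2)"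
    "\<bar>\<mu> * x * u\<^sup>2\<bar> = \<bar>x\<bar> * (\<bar>\<mu>\<bar> * u\<^sup>2)"
    by (simp_all add: abs_mult)
  moreover have "\<bar>x * v\<^sup>2 - H\<^sup>2 * x ^ 3 * u\<^sup>2 + x * u ^ 4 / 2 + x * r * u\<^sup>2 - \<mu> * x * u\<^sup>2 + u * v\<bar>
    \<le> \<bar>x * v\<^sup>2\<bar> + \<bar>H\<^sup>2 * x ^ 3 * u\<^sup>2\<bar> + \<bar>x * u ^ 4 / 2\<bar> + \<bar>x * r * u\<^sup>2\<bar> + \<bar>\<mu> * x * u\<^sup>2\<bar> + \<bar>u * v\<bar>"
    by linarith
  ultimately show ?thesis by (simp add: algebra_simps)
qed

lemma pohozaev_identity_classical:
  fixes U V \<rho> \<rho>' :: "real \<Rightarrow> real" and H \<mu> KU K\<rho> K\<rho>' :: real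
  assumes U: "\<And>x. (U has_real_derivative V x) (at x)"
    and V: "\<And>x. (V has_real_derivative H\<^sup>2 * x\<^sup>2 * U x - (U x) ^ 3 - \<rho> x * U x + \<mu> * U x) (at x)"
    and \<rho>: "\<And>x. (\<rho> has_real_derivative \<rho>' x) (at x)" and cont: "\<And>x. isCont \<rho>' x"
    and V2: "integrable lborel (\<lambda>x. (V x)\<^sup>2)" and xU2: "integrable lborel (\<lambda>x. (x * U x)\<^sup>2)"
    and U2: "integrable lborel (\<lambda>x. (U x)\<^sup>2)"
    and bounds: "\<And>x. \<bar>U x\<bar> \<le> KU" "\<And>x. \<bar>\<rho> x\<bar> \<le> K\<rho>" "\<And>x. \<bar>\<rho>' x\<bar> \<le> K\<rho>'"
  shows "2 * (LINT x|lborel. (V x)\<^sup>2) - 2 * H\<^sup>2 * (LINT x|lborel. (x * U x)\<^sup>2)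
         - 1/2 * (LINT x|lborel. (U x) ^ 4) + (LINT x|lborel. (U x)\<^sup>2 * x * \<rho>' x) = 0"
proof -
  have [measurable]: "U \<in> borel_measurable borel" "V \<in> borel_measurable borel"
    "\<rho> \<in> borel_measurable borel" "\<rho>' \<in> borel_measurable borel"
    using DERIV_isCont[OF U] DERIV_isCont[OF V] DERIV_isCont[OF \<rho>] cont
    by (simp_all add: continuous_imp_borel_measurable)
  have "integrable lborel (\<lambda>x. (U x)\<^sup>2 * (U x)\<^sup>2)"
    using power_mono[OF bounds(1), of _ 2] by (intro integrable_bounded_mult[OF U2]) auto
  then have U4: "integrable lborel (\<lambda>x. (U x) ^ 4)"
    by (simp flip: power_add)
  have "integrable lborel (\<lambda>x. \<rho>' x * (U x * (x * U x)))"
    by (rule integrable_bounded_mult[OF integrable_mult_if_square_integrable _ bounds(3)])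
       (use U2 xU2 in simp_all)
  then have U2\<rho>': "integrable lborel (\<lambda>x. (U x)\<^sup>2 * x * \<rho>' x)"
    by (simp add: power2_eq_square mult_ac)
  have U2\<rho>: "integrable lborel (\<lambda>x. \<bar>\<rho> x\<bar> * (U x)\<^sup>2)"
    using bounds(2) by (intro integrable_bounded_mult[OF U2]) auto
  define G where "G x = 2 * (V x)\<^sup>2 - 2 * H\<^sup>2 * (x * U x)\<^sup>2 - 1/2 * (U x) ^ 4 + (U x)\<^sup>2 * x * \<rho>' x" for x
  define W where "W x = 2 * (V x)\<^sup>2 + H\<^sup>2 * (x * U x)\<^sup>2 + (U x) ^ 4 + \<bar>\<rho> x\<bar> * (U x)\<^sup>2
    + (\<bar>\<mu>\<bar> + 1) * (U x)\<^sup>2" for x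
  have "(LINT x|lborel. G x) = 0"
  proof (rule integral_eq_0_if_primitive_decays)
    show "((\<lambda>x. x * (V x)\<^sup>2 - H\<^sup>2 * x ^ 3 * (U x)\<^sup>2 + x * (U x) ^ 4 / 2 + x * \<rho> x * (U x)\<^sup>2
        - \<mu> * x * (U x)\<^sup>2 + U x * V x) has_real_derivative G x) (at x)" for x
      unfolding G_def by (rule pohozaev_flux_has_derivative[OF U V \<rho>])
    show "isCont G x" for x
      unfolding G_def using DERIV_isCont[OF U] DERIV_isCont[OF V] cont by (intro continuous_intros)
    show "integrable lborel G"
      unfolding G_def using V2 xU2 U4 U2\<rho>' by simp
    show "integrable lborel W" "0 \<le> W x" for x
      unfolding W_def using V2 xU2 U4 U2\<rho> U2 by simp_all
    show "\<bar>x * (V x)\<^sup>2 - H\<^sup>2 * x ^ 3 * (U x)\<^sup>2 + x * (U x) ^ 4 / 2 + x * \<rho> x * (U x)\<^sup>2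
        - \<mu> * x * (U x)\<^sup>2 + U x * V x\<bar> \<le> \<bar>x\<bar> * W x" if "1 \<le> \<bar>x\<bar>" for x
      unfolding W_def by (rule pohozaev_flux_abs_le[OF that])
  qed
  then show ?thesis unfolding G_def using V2 xU2 U4 U2\<rho>' by simp
qed

theorem lemma1:
  fixes H b lam mu :: real and u u1 r r1 :: "real \<Rightarrow> real"
  assumes "H \<noteq> 0" and "b > 0" and "lam \<ge> 0"
    and "in_XA u" and "weak_deriv u u1"
    and "is_rho lam b (\<lambda>x. (u x)\<^sup>2) r" and "weak_deriv r r1"
    and "solves_eq H mu r u"
  shows "2 * (LINT x|lborel. (u1 x)\<^sup>2) - 2 * H\<^sup>2 * (LINT x|lborel. (x * u x)\<^sup>2)
         - 1/2 * (LINT x|lborel. (u x) ^ 4)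
         + (LINT x|lborel. (u x)\<^sup>2 * x * r1 x) = 0"
proof -
  have r: "in_H2 r" using \<open>is_rho lam b (\<lambda>x. (u x)\<^sup>2) r\<close> by (simp add: is_rho_def)
  obtain R R' K K' where R: "\<And>x. (R has_real_derivative R' x) (at x)" "\<And>x. isCont R' x"
    and r_R: "AE x in lborel. r x = R x" and r1_R': "AE x in lborel. r1 x = R' x"
    and bounds: "\<And>x. \<bar>R x\<bar> \<le> K" "\<And>x. \<bar>R' x\<bar> \<le> K'"
    using H2_classical_representative[OF r \<open>weak_deriv r r1\<close>] by blast
  have [measurable]: "r1 \<in> borel_measurable borel"
    "u \<in> borel_measurable borel" "u1 \<in> borel_measurable borel"
    using \<open>weak_deriv r r1\<close> \<open>weak_deriv u u1\<close> by (auto simp: weak_deriv_def loc_int_imp_borel_measurable)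
  obtain U V KU where UV: "\<And>x. (U has_real_derivative V x) (at x)"
    "\<And>x. (V has_real_derivative H\<^sup>2 * x\<^sup>2 * U x - (U x) ^ 3 - R x * U x + mu * U x) (at x)"
    and u_U: "AE x in lborel. u x = U x" and u1_V: "AE x in lborel. u1 x = V x"
    and L2: "L2 U" "L2 (\<lambda>x. x * U x)" "L2 V" and bound: "\<And>x. \<bar>U x\<bar> \<le> KU"
    using solution_classical_representative[OF \<open>in_XA u\<close> \<open>weak_deriv u u1\<close> \<open>solves_eq H mu r u\<close>
        in_H2_borel_measurable[OF r] r_R DERIV_isCont[OF R(1)]]
    by blast
  have [measurable]: "U \<in> borel_measurable borel" "V \<in> borel_measurable borel" "R' \<in> borel_measurable borel"
    using L2 R(2) by (auto simp: L2_def continuous_imp_borel_measurable)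
  have "(LINT x|lborel. (u1 x)\<^sup>2) = (LINT x|lborel. (V x)\<^sup>2)"
    "(LINT x|lborel. (x * u x)\<^sup>2) = (LINT x|lborel. (x * U x)\<^sup>2)"
    "(LINT x|lborel. (u x) ^ 4) = (LINT x|lborel. (U x) ^ 4)"
    "(LINT x|lborel. (u x)\<^sup>2 * x * r1 x) = (LINT x|lborel. (U x)\<^sup>2 * x * R' x)"
    by (intro integral_cong_AE; use u_U u1_V r1_R' in \<open>auto elim: AE_mp\<close>)+
  then show ?thesis
    using pohozaev_identity_classical[OF UV R _ _ _ bound bounds] L2 by (simp add: L2_def)
qed

end
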